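(* Let $\mathcal B\subseteq\mathbf B(\mathcal H)$ be a $C^*$-algebra, $\mathcal A=\overline{\mathcal B}^{\mathrm{wot}}$ its weak-operator closure, and $A\in\mathcal B$. Then $\mathrm d(M_{A,A})\le\mathrm d(M^{\mathcal B}_{A,A})$ (termwise), where $M_{A,A}:\mathcal A\to\mathcal A$ and $M^{\mathcal B}_{A,A}:\mathcal B\to\mathcal B$ are both given by $X\mapsto AXA$.
   Context: Kolmogorov numbers of a bounded $T:\mathcal X\to\mathcal Y$: $\mathrm d_n(T)=\inf_V\sup_{\|x\|\le1}\inf_{y\in V}\|Tx-y\|$, the infimum over subspaces $V\subseteq\mathcal Y$ with $\dim V<n$; $\mathrm d(T)=(\mathrm d_n(T))_n$. *)

theory Defs
  imports "HOL-Analysis.Analysis"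
begin

text \<open>A complex Hilbert space is modelled as a real Hilbert space H (its realification,
  with real inner product = real part of the complex inner product) together with a
  complex structure J (multiplication by i), which is an orthogonal operator with J o J = -id.\<close>

definition complex_structure :: "('h::{real_inner,complete_space} \<Rightarrow>\<^sub>L 'h) \<Rightarrow> bool" where
  "complex_structure J \<longleftrightarrow> (\<forall>x. blinfun_apply J (blinfun_apply J x) = - x) \<and>
     (\<forall>x y. inner (blinfun_apply J x) (blinfun_apply J y) = inner x y)"

text \<open>B(H): bounded complex-linear operators, i.e. bounded real-linear ones commuting with J.\<close>
definition cops :: "('h::{real_inner,complete_space} \<Rightarrow>\<^sub>L 'h) \<Rightarrow> ('h \<Rightarrow>\<^sub>L 'h) set" where
  "cops J = {T. \<forall>x. blinfun_apply T (blinfun_apply J x) = blinfun_apply J (blinfun_apply T x)}"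

definition cscale :: "('h::{real_inner,complete_space} \<Rightarrow>\<^sub>L 'h) \<Rightarrow> complex \<Rightarrow> ('h \<Rightarrow>\<^sub>L 'h) \<Rightarrow> ('h \<Rightarrow>\<^sub>L 'h)" where
  "cscale J c T = Re c *\<^sub>R T + Im c *\<^sub>R (J o\<^sub>L T)"

text \<open>S is the Hilbert-space adjoint of T (the real adjoint of the realification
  coincides with the complex adjoint).\<close>
definition is_adjoint :: "('h::real_inner \<Rightarrow>\<^sub>L 'h) \<Rightarrow> ('h \<Rightarrow>\<^sub>L 'h) \<Rightarrow> bool" where
  "is_adjoint T S \<longleftrightarrow> (\<forall>x y. inner (blinfun_apply T x) y = inner x (blinfun_apply S y))"

definition cstar_algebra :: "('h::{real_inner,complete_space} \<Rightarrow>\<^sub>L 'h) \<Rightarrow> ('h \<Rightarrow>\<^sub>L 'h) set \<Rightarrow> bool" where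
  "cstar_algebra J B \<longleftrightarrow>
     B \<subseteq> cops J \<and> 0 \<in> B \<and>
     (\<forall>S\<in>B. \<forall>T\<in>B. S + T \<in> B) \<and>
     (\<forall>c. \<forall>T\<in>B. cscale J c T \<in> B) \<and>
     (\<forall>S\<in>B. \<forall>T\<in>B. S o\<^sub>L T \<in> B) \<and>
     (\<forall>T\<in>B. \<exists>S\<in>B. is_adjoint T S) \<and>
     closed B"

text \<open>Closure in B(H) with respect to the weak operator topology: T is in the closure iff
  every basic WOT-neighbourhood of T meets B. (Convergence of the complex inner products
  is equivalent to convergence of all real inner products inner (T x) y.)\<close>
definition wot_closure :: "('h::{real_inner,complete_space} \<Rightarrow>\<^sub>L 'h) \<Rightarrow> ('h \<Rightarrow>\<^sub>L 'h) set \<Rightarrow> ('h \<Rightarrow>\<^sub>L 'h) set" where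
  "wot_closure J B = {T \<in> cops J. \<forall>F. finite F \<longrightarrow> (\<forall>e>0. \<exists>S\<in>B.
       \<forall>(x,y)\<in>F. \<bar>inner (blinfun_apply (T - S) x) y\<bar> < e)}"

definition cspan :: "('h::{real_inner,complete_space} \<Rightarrow>\<^sub>L 'h) \<Rightarrow> ('h \<Rightarrow>\<^sub>L 'h) set \<Rightarrow> ('h \<Rightarrow>\<^sub>L 'h) set" where
  "cspan J S = {(\<Sum>s\<in>S. cscale J (c s) s) | c. True}"

text \<open>Kolmogorov number d_n of M : X \<rightarrow> Y (X, Y complex subspaces of B(H) with the operator
  norm): the infimum over complex subspaces V of Y of complex dimension < n (i.e. spanned by
  fewer than n elements of Y) of the sup over the unit ball of X of dist(M x, V).\<close>
definition kolmogorov ::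
  "('h::{real_inner,complete_space} \<Rightarrow>\<^sub>L 'h) \<Rightarrow> ('h \<Rightarrow>\<^sub>L 'h) set \<Rightarrow> ('h \<Rightarrow>\<^sub>L 'h) set
     \<Rightarrow> (('h \<Rightarrow>\<^sub>L 'h) \<Rightarrow> ('h \<Rightarrow>\<^sub>L 'h)) \<Rightarrow> nat \<Rightarrow> real" where
  "kolmogorov J X Y M n =
     Inf {Sup ((\<lambda>x. infdist (M x) V) ` {x \<in> X. norm x \<le> 1}) | V.
            \<exists>S. finite S \<and> card S < n \<and> S \<subseteq> Y \<and> V = cspan J S}"

end

theory Submission
  imports Defs
begin

text \<open>
  Fix a finite set \<open>S \<subseteq> B\<close> with \<open>V = cspan J S\<close>; \<open>V\<close> is finite dimensional over the reals,
  so its bounded parts are totally bounded, and therefore the distance to \<open>V\<close> is lower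
  semicontinuous for strong (pointwise) convergence of uniformly bounded operators.
  By the Kaplansky density theorem, every contraction \<open>X\<close> in the weak operator closure of
  \<open>B\<close> is a strong limit of contractions \<open>Y \<in> B\<close>, and then \<open>A Y A \<rightarrow> A X A\<close> strongly.
  Hence \<open>dist (A X A, V) \<le> sup\<^sub>Y dist (A Y A, V)\<close>, and since every such \<open>V\<close> is also admissible
  on the left-hand side, the infima over \<open>V\<close> compare as claimed.

  Kaplansky's theorem is proved for real \<open>*\<close>-algebras via the map \<open>f(t) = 2t/(1 + t\<^sup>2)\<close>:
  an operator \<open>X\<close> with \<open>\<parallel>X\<parallel> < 1\<close> in the weak closure is \<open>f(Z)\<close> for some \<open>Z\<close> in the weak
  closure (a fixed point of a contraction), \<open>Z\<close> is approximated strongly together with its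
  adjoint by elements of \<open>B\<close> (projection onto the graph of the adjoint in a finite power
  of the Hilbert space), and \<open>f\<close> maps into the unit ball and is strongly continuous.
\<close>

section \<open>Adjoints\<close>

lemma le_if_square_le_mult:
  fixes x c :: real
  assumes "0 \<le> c" "x\<^sup>2 \<le> c * x"
  shows "x \<le> c"
  using assms by (cases "x > 0") (auto simp: power2_eq_square)

lemma is_adjoint_sym: "is_adjoint T S \<Longrightarrow> is_adjoint S T"
  unfolding is_adjoint_def by (metis inner_commute)

lemma is_adjoint_add: "is_adjoint T S \<Longrightarrow> is_adjoint T' S' \<Longrightarrow> is_adjoint (T + T') (S + S')"
  unfolding is_adjoint_def by (simp add: plus_blinfun.rep_eq inner_add_left inner_add_right)

lemma is_adjoint_diff: "is_adjoint T S \<Longrightarrow> is_adjoint T' S' \<Longrightarrow> is_adjoint (T - T') (S - S')"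
  unfolding is_adjoint_def by (simp add: minus_blinfun.rep_eq inner_diff_left inner_diff_right)

lemma is_adjoint_scaleR: "is_adjoint T S \<Longrightarrow> is_adjoint (r *\<^sub>R T) (r *\<^sub>R S)"
  unfolding is_adjoint_def by (simp add: scaleR_blinfun.rep_eq)

lemma is_adjoint_compose: "is_adjoint T S \<Longrightarrow> is_adjoint T' S' \<Longrightarrow> is_adjoint (T o\<^sub>L T') (S' o\<^sub>L S)"
  unfolding is_adjoint_def by simp

lemma is_adjoint_zero: "is_adjoint 0 0"
  unfolding is_adjoint_def by simp

lemma is_adjoint_id: "is_adjoint id_blinfun id_blinfun"
  unfolding is_adjoint_def by simp

lemma norm_le_if_inner_represents:
  fixes T :: "'h::real_inner \<Rightarrow>\<^sub>L 'h"
  assumes "\<And>x. inner (blinfun_apply T x) y = inner x w"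
  shows "norm w \<le> norm T * norm y"
proof -
  have "(norm w)\<^sup>2 = inner (blinfun_apply T w) y"
    using assms[of w] by (simp add: power2_norm_eq_inner)
  also have "\<dots> \<le> norm (blinfun_apply T w) * norm y"
    by (rule norm_cauchy_schwarz)
  also have "\<dots> \<le> norm T * norm w * norm y"
    by (simp add: mult_right_mono norm_blinfun)
  finally have "(norm w)\<^sup>2 \<le> (norm T * norm y) * norm w"
    by (simp only: ac_simps)
  then show ?thesis
    by (rule le_if_square_le_mult[rotated]) simp
qed

lemma norm_le_if_is_adjoint:
  fixes T :: "'h::real_inner \<Rightarrow>\<^sub>L 'h"
  assumes "is_adjoint T S" shows "norm S \<le> norm T"
  using assms unfolding is_adjoint_def by (intro norm_blinfun_bound norm_le_if_inner_represents) auto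

lemma is_adjoint_tendsto:
  fixes Z :: "nat \<Rightarrow> ('h::{real_inner,complete_space} \<Rightarrow>\<^sub>L 'h)"
  assumes "\<And>n. is_adjoint (Z n) (W n)" "Z \<longlonglongrightarrow> Z0" "W \<longlonglongrightarrow> W0"
  shows "is_adjoint Z0 W0"
  unfolding is_adjoint_def
proof (intro allI)
  fix x y
  have "(\<lambda>n. inner (Z n x) y) \<longlonglongrightarrow> inner (Z0 x) y"
    by (intro tendsto_intros assms)
  moreover have "(\<lambda>n. inner x (W n y)) \<longlonglongrightarrow> inner x (W0 y)"
    by (intro tendsto_intros assms)
  moreover have "(\<lambda>n. inner (Z n x) y) = (\<lambda>n. inner x (W n y))"
    using assms(1) unfolding is_adjoint_def by auto
  ultimately show "inner (Z0 x) y = inner x (W0 y)"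
    using LIMSEQ_unique by metis
qed

section \<open>The weak operator closure of a real \<open>*\<close>-algebra\<close>

text \<open>Kaplansky's theorem needs no complex structure, so it is proved for these.\<close>

definition real_star_algebra :: "('h::{real_inner,complete_space} \<Rightarrow>\<^sub>L 'h) set \<Rightarrow> bool" where
  "real_star_algebra B \<longleftrightarrow> 0 \<in> B \<and> (\<forall>S\<in>B. \<forall>T\<in>B. S + T \<in> B) \<and> (\<forall>r. \<forall>T\<in>B. r *\<^sub>R T \<in> B) \<and>
     (\<forall>S\<in>B. \<forall>T\<in>B. S o\<^sub>L T \<in> B) \<and> (\<forall>T\<in>B. \<exists>S\<in>B. is_adjoint T S) \<and> closed B"

definition weak_closure :: "('h::{real_inner,complete_space} \<Rightarrow>\<^sub>L 'h) set \<Rightarrow> ('h \<Rightarrow>\<^sub>L 'h) set" where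
  "weak_closure B = {T. \<forall>F. finite F \<longrightarrow> (\<forall>e>0. \<exists>S\<in>B.
       \<forall>(x,y)\<in>F. \<bar>inner (blinfun_apply (T - S) x) y\<bar> < e)}"

lemma cstar_algebra_imp_real_star_algebra:
  assumes "cstar_algebra J B" shows "real_star_algebra B"
proof -
  have "r *\<^sub>R T \<in> B" if "T \<in> B" for r T
  proof -
    have "cscale J (complex_of_real r) T \<in> B" using assms that unfolding cstar_algebra_def by blast
    then show ?thesis by (simp add: cscale_def)
  qed
  then show ?thesis using assms unfolding cstar_algebra_def real_star_algebra_def by blast
qed

lemma cstar_algebra_subset_wot_closure:
  assumes "cstar_algebra J B" shows "B \<subseteq> wot_closure J B"
proof
  fix T assume "T \<in> B"
  then show "T \<in> wot_closure J B"
    using assms unfolding cstar_algebra_def wot_closure_def by (auto intro!: bexI[of _ T])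
qed

lemma wot_closure_subset_weak_closure: "wot_closure J B \<subseteq> weak_closure B"
  unfolding wot_closure_def weak_closure_def by blast

lemma weak_closureD:
  "T \<in> weak_closure B \<Longrightarrow> finite F \<Longrightarrow> e > 0 \<Longrightarrow> \<exists>S\<in>B. \<forall>(x,y)\<in>F. \<bar>inner (blinfun_apply (T - S) x) y\<bar> < e"
  unfolding weak_closure_def by blast

lemma weak_closureI:
  "(\<And>F e. finite F \<Longrightarrow> e > 0 \<Longrightarrow> \<exists>S\<in>B. \<forall>(x,y)\<in>F. \<bar>inner (blinfun_apply (T - S) x) y\<bar> < e) \<Longrightarrow> T \<in> weak_closure B"
  unfolding weak_closure_def by blast

lemma weak_closure_subset: "B \<subseteq> weak_closure B"
proof
  fix T assume "T \<in> B"
  then show "T \<in> weak_closure B" by (intro weak_closureI) (auto intro!: bexI[of _ T])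
qed

lemma weak_closure_add:
  assumes B: "real_star_algebra B" and T1: "T1 \<in> weak_closure B" and T2: "T2 \<in> weak_closure B"
  shows "T1 + T2 \<in> weak_closure B"
proof (rule weak_closureI)
  fix F :: "('a \<times> 'a) set" and e :: real assume F: "finite F" and e: "e > 0"
  obtain S1 where S1: "S1 \<in> B" "\<forall>(x,y)\<in>F. \<bar>inner (blinfun_apply (T1 - S1) x) y\<bar> < e/2"
    using weak_closureD[OF T1 F, of "e/2"] e by auto
  obtain S2 where S2: "S2 \<in> B" "\<forall>(x,y)\<in>F. \<bar>inner (blinfun_apply (T2 - S2) x) y\<bar> < e/2"
    using weak_closureD[OF T2 F, of "e/2"] e by auto
  have "S1 + S2 \<in> B" using B S1 S2 unfolding real_star_algebra_def by blast
  moreover have "\<forall>(x,y)\<in>F. \<bar>inner (blinfun_apply (T1 + T2 - (S1 + S2)) x) y\<bar> < e"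
  proof (clarify)
    fix x y assume xy: "(x,y) \<in> F"
    have "inner (blinfun_apply (T1 + T2 - (S1 + S2)) x) y =
        inner (blinfun_apply (T1 - S1) x) y + inner (blinfun_apply (T2 - S2) x) y"
      by (simp add: blinfun.diff_left blinfun.add_left inner_add_left inner_diff_left)
    then show "\<bar>inner (blinfun_apply (T1 + T2 - (S1 + S2)) x) y\<bar> < e"
      using S1(2) S2(2) xy by fastforce
  qed
  ultimately show "\<exists>S\<in>B. \<forall>(x,y)\<in>F. \<bar>inner (blinfun_apply (T1 + T2 - S) x) y\<bar> < e" by blast
qed

lemma weak_closure_scaleR:
  assumes B: "real_star_algebra B" and T: "T \<in> weak_closure B"
  shows "r *\<^sub>R T \<in> weak_closure B"
proof (rule weak_closureI)
  fix F :: "('a \<times> 'a) set" and e :: real assume F: "finite F" and e: "e > 0"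
  obtain S where S: "S \<in> B" "\<forall>(x,y)\<in>F. \<bar>inner (blinfun_apply (T - S) x) y\<bar> < e/(\<bar>r\<bar>+1)"
    using weak_closureD[OF T F, of "e/(\<bar>r\<bar>+1)"] e by auto
  have "r *\<^sub>R S \<in> B" using B S unfolding real_star_algebra_def by blast
  moreover have "\<forall>(x,y)\<in>F. \<bar>inner (blinfun_apply (r *\<^sub>R T - r *\<^sub>R S) x) y\<bar> < e"
  proof (clarify)
    fix x y assume xy: "(x,y) \<in> F"
    have eq: "inner (blinfun_apply (r *\<^sub>R T - r *\<^sub>R S) x) y = r * inner (blinfun_apply (T - S) x) y"
      by (simp add: minus_blinfun.rep_eq scaleR_blinfun.rep_eq inner_diff_left algebra_simps)
    have "\<bar>r\<bar> * \<bar>inner (blinfun_apply (T - S) x) y\<bar> \<le> (\<bar>r\<bar>+1) * \<bar>inner (blinfun_apply (T - S) x) y\<bar>"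
      by (simp add: mult_right_mono)
    also have "\<dots> < (\<bar>r\<bar>+1) * (e/(\<bar>r\<bar>+1))"
      using S(2) xy by (intro mult_strict_left_mono) auto
    also have "\<dots> = e" by simp
    finally show "\<bar>inner (blinfun_apply (r *\<^sub>R T - r *\<^sub>R S) x) y\<bar> < e"
      by (simp add: eq abs_mult)
  qed
  ultimately show "\<exists>S\<in>B. \<forall>(x,y)\<in>F. \<bar>inner (blinfun_apply (r *\<^sub>R T - S) x) y\<bar> < e" by blast
qed

lemma weak_closure_adjoint:
  assumes B: "real_star_algebra B" and T: "T \<in> weak_closure B" and adj: "is_adjoint T Ts"
  shows "Ts \<in> weak_closure B"
proof (rule weak_closureI)
  fix F :: "('a \<times> 'a) set" and e :: real assume F: "finite F" and e: "e > 0"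
  obtain S where S: "S \<in> B" "\<forall>(x,y)\<in>(\<lambda>(x,y). (y,x)) ` F. \<bar>inner (blinfun_apply (T - S) x) y\<bar> < e"
    using weak_closureD[OF T _ e, of "(\<lambda>(x,y). (y,x)) ` F"] F by auto
  obtain Ss where Ss: "Ss \<in> B" "is_adjoint S Ss" using B S(1) unfolding real_star_algebra_def by blast
  have a2: "is_adjoint (T - S) (Ts - Ss)" by (rule is_adjoint_diff[OF adj Ss(2)])
  have "\<forall>(x,y)\<in>F. \<bar>inner (blinfun_apply (Ts - Ss) x) y\<bar> < e"
  proof (clarify)
    fix x y assume xy: "(x,y) \<in> F"
    have "inner (blinfun_apply (Ts - Ss) x) y = inner (blinfun_apply (T - S) y) x"
      using a2 unfolding is_adjoint_def by (metis inner_commute)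
    then show "\<bar>inner (blinfun_apply (Ts - Ss) x) y\<bar> < e" using S(2) xy by force
  qed
  then show "\<exists>S\<in>B. \<forall>(x,y)\<in>F. \<bar>inner (blinfun_apply (Ts - S) x) y\<bar> < e" using Ss by blast
qed

lemma weak_closure_compose:
  assumes B: "real_star_algebra B" and T1: "T1 \<in> weak_closure B" and T2: "T2 \<in> weak_closure B"
  shows "T1 o\<^sub>L T2 \<in> weak_closure B"
proof (rule weak_closureI)
  fix F :: "('a \<times> 'a) set" and e :: real assume F: "finite F" and e: "e > 0"
  obtain S where S: "S \<in> B" "\<forall>(x,y)\<in>(\<lambda>(x,y). (blinfun_apply T2 x,y)) ` F. \<bar>inner (blinfun_apply (T1 - S) x) y\<bar> < e/2"
    using weak_closureD[OF T1 _, of "(\<lambda>(x,y). (blinfun_apply T2 x,y)) ` F" "e/2"] F e by auto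
  obtain Ss where Ss: "Ss \<in> B" "is_adjoint S Ss" using B S(1) unfolding real_star_algebra_def by blast
  obtain S' where S': "S' \<in> B" "\<forall>(x,y)\<in>(\<lambda>(x,y). (x, blinfun_apply Ss y)) ` F. \<bar>inner (blinfun_apply (T2 - S') x) y\<bar> < e/2"
    using weak_closureD[OF T2 _, of "(\<lambda>(x,y). (x, blinfun_apply Ss y)) ` F" "e/2"] F e by auto
  have "S o\<^sub>L S' \<in> B" using B S(1) S'(1) unfolding real_star_algebra_def by blast
  moreover have "\<forall>(x,y)\<in>F. \<bar>inner (blinfun_apply ((T1 o\<^sub>L T2) - (S o\<^sub>L S')) x) y\<bar> < e"
  proof (clarify)
    fix x y assume xy: "(x,y) \<in> F"
    have "inner (blinfun_apply ((T1 o\<^sub>L T2) - (S o\<^sub>L S')) x) y =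
      inner (blinfun_apply (T1 - S) (blinfun_apply T2 x)) y + inner (blinfun_apply S (blinfun_apply (T2 - S') x)) y"
      by (simp add: minus_blinfun.rep_eq blinfun.diff_right inner_diff_left)
    also have "inner (blinfun_apply S (blinfun_apply (T2 - S') x)) y = inner (blinfun_apply (T2 - S') x) (blinfun_apply Ss y)"
      using Ss(2) unfolding is_adjoint_def by blast
    finally have eq: "inner (blinfun_apply ((T1 o\<^sub>L T2) - (S o\<^sub>L S')) x) y =
      inner (blinfun_apply (T1 - S) (blinfun_apply T2 x)) y + inner (blinfun_apply (T2 - S') x) (blinfun_apply Ss y)" .
    have "\<bar>inner (blinfun_apply (T1 - S) (blinfun_apply T2 x)) y\<bar> < e/2" using S(2) xy by force
    moreover have "\<bar>inner (blinfun_apply (T2 - S') x) (blinfun_apply Ss y)\<bar> < e/2" using S'(2) xy by force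
    ultimately show "\<bar>inner (blinfun_apply ((T1 o\<^sub>L T2) - (S o\<^sub>L S')) x) y\<bar> < e" unfolding eq by linarith
  qed
  ultimately show "\<exists>S\<in>B. \<forall>(x,y)\<in>F. \<bar>inner (blinfun_apply ((T1 o\<^sub>L T2) - S) x) y\<bar> < e" by blast
qed

lemma closed_weak_closure: "closed (weak_closure B)"
proof -
  have "T \<in> weak_closure B" if T: "T \<in> closure (weak_closure B)" for T
  proof (rule weak_closureI)
    fix F :: "('a \<times> 'a) set" and e :: real assume F: "finite F" and e: "e > 0"
    define M where "M = (\<Sum>(x,y)\<in>F. norm x * norm y) + 1"
    have M: "M > 0" unfolding M_def by (auto intro!: add_nonneg_pos sum_nonneg)
    have Mb: "norm x * norm y \<le> M" if "(x,y) \<in> F" for x y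
      using member_le_sum[OF that, of "\<lambda>(x,y). norm x * norm y"] F unfolding M_def by auto
    have "e/(2*M) > 0" using e M by simp
    then obtain T' where T': "T' \<in> weak_closure B" "norm (T - T') < e/(2*M)"
      using T unfolding closure_approachable dist_norm by (metis norm_minus_commute)
    obtain S where S: "S \<in> B" "\<forall>(x,y)\<in>F. \<bar>inner ((T' - S) x) y\<bar> < e/2"
      using weak_closureD[OF T'(1) F, of "e/2"] e by auto
    have "\<bar>inner ((T - S) x) y\<bar> < e" if xy: "(x,y) \<in> F" for x y
    proof -
      have "\<bar>inner ((T - T') x) y\<bar> \<le> norm (T - T') * (norm x * norm y)"
        using Cauchy_Schwarz_ineq2 [of "(T - T') x" y] norm_blinfun[of "T - T'" x]
        by (smt (verit) mult.assoc mult_right_mono norm_ge_zero)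
      also have "\<dots> \<le> e/(2*M) * M"
        using T'(2) Mb[OF xy] M e by (intro mult_mono) auto
      finally have "\<bar>inner ((T - T') x) y\<bar> \<le> e/2" using M by simp
      moreover have "inner ((T - S) x) y = inner ((T - T') x) y + inner ((T' - S) x) y"
        by (simp add: blinfun.diff_left inner_diff_left)
      ultimately show ?thesis using S(2) xy by fastforce
    qed
    then show "\<exists>S\<in>B. \<forall>(x,y)\<in>F. \<bar>inner ((T - S) x) y\<bar> < e" using S(1) by blast
  qed
  then show ?thesis by (metis closure_subset_eq subsetI)
qed

section \<open>Finite families of vectors\<close>

definition sum_sqnorm :: "'i set \<Rightarrow> ('i \<Rightarrow> 'h::real_inner) \<Rightarrow> real" where
  "sum_sqnorm I u = (\<Sum>i\<in>I. (norm (u i))^2)"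

definition sum_inner :: "'i set \<Rightarrow> ('i \<Rightarrow> 'h::real_inner) \<Rightarrow> ('i \<Rightarrow> 'h) \<Rightarrow> real" where
  "sum_inner I u v = (\<Sum>i\<in>I. inner (u i) (v i))"

lemma sum_sqnorm_nonneg: "sum_sqnorm I u \<ge> 0" unfolding sum_sqnorm_def by (auto intro: sum_nonneg)

lemma norm_sq_le_sum_sqnorm: "finite I \<Longrightarrow> i \<in> I \<Longrightarrow> (norm (u i))^2 \<le> sum_sqnorm I u"
  unfolding sum_sqnorm_def by (rule member_le_sum) auto

lemma parallelogram_law: "(norm (a + b))^2 + (norm (a - b))^2 = 2 * (norm a)^2 + 2 * (norm (b::'h::real_inner))^2"
  by (simp add: power2_norm_eq_inner inner_add_left inner_add_right inner_diff_left inner_diff_right inner_commute)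

lemma norm_diff_scaleR_sq: "(norm (a - l *\<^sub>R b))^2 = (norm a)^2 - 2 * l * inner a b + l^2 * (norm (b::'h::real_inner))^2"
  by (simp only: power2_norm_eq_inner) (simp add: inner_diff_left inner_diff_right inner_commute power2_eq_square algebra_simps)

lemma sum_sqnorm_diff_scaleR: "sum_sqnorm I (\<lambda>i. a i - l *\<^sub>R b i) = sum_sqnorm I a - 2 * l * sum_inner I a b + l^2 * sum_sqnorm I b"
  unfolding sum_sqnorm_def sum_inner_def by (simp add: norm_diff_scaleR_sq sum.distrib sum_subtractf sum_distrib_left)

lemma sum_sqnorm_parallelogram: "sum_sqnorm I (\<lambda>i. a i + b i) + sum_sqnorm I (\<lambda>i. a i - b i) = 2 * sum_sqnorm I a + 2 * sum_sqnorm I b"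
  unfolding sum_sqnorm_def by (simp add: parallelogram_law sum.distrib[symmetric] sum_distrib_left)

lemma sum_sqnorm_scaleR: "sum_sqnorm I (\<lambda>i. c *\<^sub>R u i) = c^2 * sum_sqnorm I u"
  unfolding sum_sqnorm_def by (simp add: sum_distrib_left power_mult_distrib)

lemma sum_inner_Cauchy_Schwarz: "\<bar>sum_inner I u v\<bar> \<le> sqrt (sum_sqnorm I u) * sqrt (sum_sqnorm I v)"
proof -
  have "\<bar>sum_inner I u v\<bar> \<le> (\<Sum>i\<in>I. norm (u i) * norm (v i))"
    unfolding sum_inner_def by (rule order_trans[OF sum_abs]) (intro sum_mono Cauchy_Schwarz_ineq2)
  also have "\<dots> \<le> sqrt (\<Sum>i\<in>I. (norm (u i))^2) * sqrt (\<Sum>i\<in>I. (norm (v i))^2)"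
  proof -
    have "(\<Sum>i\<in>I. norm (u i) * norm (v i))^2 \<le> (\<Sum>i\<in>I. (norm (u i))^2) * (\<Sum>i\<in>I. (norm (v i))^2)"
      by (rule Cauchy_Schwarz_ineq_sum)
    then have "sqrt ((\<Sum>i\<in>I. norm (u i) * norm (v i))^2) \<le> sqrt ((\<Sum>i\<in>I. (norm (u i))^2) * (\<Sum>i\<in>I. (norm (v i))^2))"
      by (rule real_sqrt_le_mono)
    then show ?thesis by (simp add: real_sqrt_mult)
  qed
  finally show ?thesis unfolding sum_sqnorm_def .
qed

lemma tendsto_sum_sqnorm:
  assumes "finite I" "\<And>i. i \<in> I \<Longrightarrow> (\<lambda>n. f n i) \<longlonglongrightarrow> g i"
  shows "(\<lambda>n. sum_sqnorm I (f n)) \<longlonglongrightarrow> sum_sqnorm I g"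
  unfolding sum_sqnorm_def by (intro tendsto_intros assms)

lemma convergent_if_sum_sqnorm_Cauchy:
  fixes f :: "nat \<Rightarrow> 'i \<Rightarrow> 'h::{real_inner,complete_space}"
  assumes I: "finite I"
    and C: "\<And>n m. sum_sqnorm I (\<lambda>i. f n i - f m i) \<le> 2 / (real n + 1) + 2 / (real m + 1)"
  shows "\<exists>w. \<forall>i\<in>I. (\<lambda>n. f n i) \<longlonglongrightarrow> w i"
proof -
  have "Cauchy (\<lambda>n. f n i)" if i: "i \<in> I" for i
  proof (rule metric_CauchyI)
    fix e :: real assume e: "e > 0"
    obtain K :: nat where K: "4 / e\<^sup>2 < real K" using reals_Archimedean2 by blast
    have "dist (f m i) (f n i) < e" if "m \<ge> K" "n \<ge> K" for m n
    proof -
      have "(dist (f m i) (f n i))\<^sup>2 \<le> sum_sqnorm I (\<lambda>i. f m i - f n i)"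
        using norm_sq_le_sum_sqnorm[OF I i, of "\<lambda>i. f m i - f n i"] by (simp add: dist_norm)
      also have "\<dots> \<le> 2 / (real m + 1) + 2 / (real n + 1)" by (rule C)
      also have "\<dots> \<le> 2 / (real K + 1) + 2 / (real K + 1)"
        using that by (intro add_mono divide_left_mono) auto
      also have "\<dots> = 4 / (real K + 1)" by (simp add: add_divide_distrib[symmetric])
      also have "\<dots> < e\<^sup>2"
        using K e by (simp add: divide_less_eq field_simps) (smt (verit) zero_less_power)
      finally show ?thesis by (rule power2_less_imp_less) (use e in simp)
    qed
    then show "\<exists>M. \<forall>m\<ge>M. \<forall>n\<ge>M. dist (f m i) (f n i) < e" by blast
  qed
  then have "(\<lambda>n. f n i) \<longlonglongrightarrow> lim (\<lambda>n. f n i)" if "i \<in> I" for i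
    using that by (simp add: Cauchy_convergent_iff convergent_LIMSEQ_iff)
  then show ?thesis by (intro exI[of _ "\<lambda>i. lim (\<lambda>n. f n i)"]) auto
qed

lemma minimizing_sequence_converges:
  fixes t :: "'i \<Rightarrow> 'h::{real_inner,complete_space}"
  assumes I: "finite I"
    and Wadd: "\<And>u v. u \<in> W \<Longrightarrow> v \<in> W \<Longrightarrow> (\<lambda>i. u i + v i) \<in> W"
    and Wsc: "\<And>u c. u \<in> W \<Longrightarrow> (\<lambda>i. c *\<^sub>R u i) \<in> W"
    and dle: "\<And>v. v \<in> W \<Longrightarrow> d \<le> sum_sqnorm I (\<lambda>i. t i - v i)"
    and vs: "\<And>n. vs n \<in> W" "\<And>n. sum_sqnorm I (\<lambda>i. t i - vs n i) < d + 1 / (real n + 1)"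
  shows "\<exists>w. (\<forall>i\<in>I. (\<lambda>n. vs n i) \<longlonglongrightarrow> w i) \<and> sum_sqnorm I (\<lambda>i. t i - w i) = d"
proof -
  text \<open>The parallelogram law at the midpoint makes the minimizing sequence Cauchy.\<close>
  have "sum_sqnorm I (\<lambda>i. vs n i - vs m i) \<le> 2 / (real n + 1) + 2 / (real m + 1)" for n m
  proof -
    define mid where "mid = (\<lambda>i. (1/2) *\<^sub>R (vs n i + vs m i))"
    have "d \<le> sum_sqnorm I (\<lambda>i. t i - mid i)" unfolding mid_def by (intro dle Wsc Wadd vs)
    moreover have "(\<lambda>i. (t i - vs m i) + (t i - vs n i)) = (\<lambda>i. 2 *\<^sub>R (t i - mid i))"
      unfolding mid_def by (auto simp: algebra_simps scaleR_2)
    moreover have "(\<lambda>i. (t i - vs m i) - (t i - vs n i)) = (\<lambda>i. vs n i - vs m i)" by auto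
    ultimately have "sum_sqnorm I (\<lambda>i. vs n i - vs m i) \<le> 2 * sum_sqnorm I (\<lambda>i. t i - vs m i)
        + 2 * sum_sqnorm I (\<lambda>i. t i - vs n i) - 4 * d"
      using sum_sqnorm_parallelogram[of I "\<lambda>i. t i - vs m i" "\<lambda>i. t i - vs n i"]
      by (simp add: sum_sqnorm_scaleR)
    then show ?thesis using vs(2)[of n] vs(2)[of m] by simp
  qed
  then obtain w where wl: "\<And>i. i \<in> I \<Longrightarrow> (\<lambda>n. vs n i) \<longlonglongrightarrow> w i"
    using convergent_if_sum_sqnorm_Cauchy[OF I] by blast
  have "(\<lambda>n. sum_sqnorm I (\<lambda>i. t i - vs n i)) \<longlonglongrightarrow> sum_sqnorm I (\<lambda>i. t i - w i)"
    by (rule tendsto_sum_sqnorm[OF I]) (intro tendsto_intros wl)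
  moreover have "(\<lambda>n. sum_sqnorm I (\<lambda>i. t i - vs n i)) \<longlonglongrightarrow> d"
  proof (rule tendsto_sandwich[where f="\<lambda>n. d" and h="\<lambda>n. d + 1 / (real n + 1)"])
    show "\<forall>\<^sub>F n in sequentially. d \<le> sum_sqnorm I (\<lambda>i. t i - vs n i)" using dle vs(1) by auto
    show "\<forall>\<^sub>F n in sequentially. sum_sqnorm I (\<lambda>i. t i - vs n i) \<le> d + 1 / (real n + 1)"
      using vs(2) by (intro always_eventually allI less_imp_le)
    show "(\<lambda>n. d + 1 / (real n + 1)) \<longlonglongrightarrow> d"
      using tendsto_add[OF tendsto_const[of d] LIMSEQ_inverse_real_of_nat]
      by (simp add: inverse_eq_divide add.commute)
  qed simp
  ultimately have "sum_sqnorm I (\<lambda>i. t i - w i) = d" by (rule LIMSEQ_unique)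
  then show ?thesis using wl by blast
qed

lemma best_approximation_exists:
  fixes t :: "'i \<Rightarrow> 'h::{real_inner,complete_space}"
  assumes I: "finite I" and W0: "(\<lambda>i. 0) \<in> W"
    and Wadd: "\<And>u v. u \<in> W \<Longrightarrow> v \<in> W \<Longrightarrow> (\<lambda>i. u i + v i) \<in> W"
    and Wsc: "\<And>u c. u \<in> W \<Longrightarrow> (\<lambda>i. c *\<^sub>R u i) \<in> W"
  shows "\<exists>w. (\<forall>e>0. \<exists>v\<in>W. sum_sqnorm I (\<lambda>i. w i - v i) < e) \<and>
    (\<forall>v\<in>W. \<forall>l. sum_sqnorm I (\<lambda>i. t i - w i) \<le> sum_sqnorm I (\<lambda>i. t i - w i - l *\<^sub>R v i))"
proof -
  define D where "D = (\<lambda>v. sum_sqnorm I (\<lambda>i. t i - v i)) ` W"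
  define d where "d = Inf D"
  have Dbdd: "bdd_below D" unfolding D_def by (auto intro!: bdd_belowI[of _ 0] sum_sqnorm_nonneg)
  have dle: "d \<le> sum_sqnorm I (\<lambda>i. t i - v i)" if "v \<in> W" for v
    unfolding d_def D_def using that Dbdd D_def by (auto intro!: cInf_lower)
  have "\<exists>v\<in>W. sum_sqnorm I (\<lambda>i. t i - v i) < d + 1 / (real n + 1)" for n
  proof -
    have "D \<noteq> {}" using W0 unfolding D_def by auto
    moreover have "Inf D < d + 1 / (real n + 1)" unfolding d_def by simp
    ultimately obtain x where "x \<in> D" "x < d + 1 / (real n + 1)"
      using cInf_less_iff[OF _ Dbdd] by blast
    then show ?thesis unfolding D_def by auto
  qed
  then obtain vs where vs: "\<And>n. vs n \<in> W" "\<And>n. sum_sqnorm I (\<lambda>i. t i - vs n i) < d + 1 / (real n + 1)"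
    by metis
  obtain w where wl: "\<And>i. i \<in> I \<Longrightarrow> (\<lambda>n. vs n i) \<longlonglongrightarrow> w i" and dw: "sum_sqnorm I (\<lambda>i. t i - w i) = d"
    using minimizing_sequence_converges[OF I Wadd Wsc dle vs] by blast
  have "sum_sqnorm I (\<lambda>i. t i - w i) \<le> sum_sqnorm I (\<lambda>i. t i - w i - l *\<^sub>R v i)" if v: "v \<in> W" for v l
  proof -
    have "(\<lambda>n. sum_sqnorm I (\<lambda>i. t i - (vs n i + l *\<^sub>R v i))) \<longlonglongrightarrow> sum_sqnorm I (\<lambda>i. t i - (w i + l *\<^sub>R v i))"
      by (rule tendsto_sum_sqnorm[OF I]) (intro tendsto_intros wl)
    moreover have "\<forall>n. d \<le> sum_sqnorm I (\<lambda>i. t i - (vs n i + l *\<^sub>R v i))"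
      using dle Wadd Wsc vs(1) v by blast
    ultimately have "d \<le> sum_sqnorm I (\<lambda>i. t i - (w i + l *\<^sub>R v i))"
      by (intro LIMSEQ_le_const) auto
    then show ?thesis unfolding dw by (simp add: diff_diff_eq)
  qed
  moreover have "\<exists>v\<in>W. sum_sqnorm I (\<lambda>i. w i - v i) < e" if e: "e > 0" for e
  proof -
    have "(\<lambda>n. sum_sqnorm I (\<lambda>i. w i - vs n i)) \<longlonglongrightarrow> sum_sqnorm I (\<lambda>i. w i - w i)"
      by (rule tendsto_sum_sqnorm[OF I]) (intro tendsto_intros wl)
    then have "(\<lambda>n. sum_sqnorm I (\<lambda>i. w i - vs n i)) \<longlonglongrightarrow> 0"
      by (simp add: sum_sqnorm_def)
    then obtain no where "\<forall>n\<ge>no. norm (sum_sqnorm I (\<lambda>i. w i - vs n i) - 0) < e"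
      using LIMSEQ_D e by blast
    then show ?thesis using vs(1)[of no] by (intro bexI[of _ "vs no"]) auto
  qed
  ultimately show ?thesis by blast
qed

lemma sum_inner_eq_0_if_minimal:
  assumes min: "\<And>l. sum_sqnorm I z \<le> sum_sqnorm I (\<lambda>i. z i - l *\<^sub>R v i)"
  shows "sum_inner I z v = 0"
proof -
  define c where "c = sum_inner I z v"
  define N where "N = sum_sqnorm I v"
  have N: "N \<ge> 0" unfolding N_def by (rule sum_sqnorm_nonneg)
  have "0 \<le> l * (l * N - 2 * c)" for l
    using min[of l] unfolding sum_sqnorm_diff_scaleR c_def N_def by (simp add: power2_eq_square algebra_simps)
  from this[of "c / (N + 1)"] have "0 \<le> c * (c * N - 2 * c * (N + 1)) / (N + 1)^2"
    using N by (simp add: field_simps power2_eq_square)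
  then have "0 \<le> c * (c * N - 2 * c * (N + 1))" using N by (auto simp: zero_le_divide_iff)
  also have "\<dots> = - (c\<^sup>2 * (N + 2))" by (simp add: power2_eq_square algebra_simps)
  finally show ?thesis unfolding c_def using N
    by (smt (verit) mult_nonneg_nonneg zero_le_power2 power2_eq_square mult_le_0_iff)
qed

lemma orthogonal_projection_exists:
  fixes t :: "'i \<Rightarrow> 'h::{real_inner,complete_space}"
  assumes "finite I" and "(\<lambda>i. 0) \<in> W"
    and "\<And>u v. u \<in> W \<Longrightarrow> v \<in> W \<Longrightarrow> (\<lambda>i. u i + v i) \<in> W"
    and "\<And>u c. u \<in> W \<Longrightarrow> (\<lambda>i. c *\<^sub>R u i) \<in> W"
  shows "\<exists>w. (\<forall>e>0. \<exists>v\<in>W. sum_sqnorm I (\<lambda>i. w i - v i) < e) \<and> (\<forall>v\<in>W. sum_inner I (\<lambda>i. t i - w i) v = 0)"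
  using best_approximation_exists[OF assms, of t] sum_inner_eq_0_if_minimal by blast

lemma eq_0_if_abs_le_all:
  fixes a K :: real
  assumes K: "K \<ge> 0" and h: "\<And>e. e > 0 \<Longrightarrow> \<bar>a\<bar> \<le> K * e"
  shows "a = 0"
proof (rule ccontr)
  assume "a \<noteq> 0"
  then have pa: "\<bar>a\<bar> > 0" by simp
  have "\<bar>a\<bar> \<le> K * (\<bar>a\<bar> / (K + 1))" using h[of "\<bar>a\<bar> / (K+1)"] pa K by simp
  also have "\<dots> < \<bar>a\<bar>" using pa K by (simp add: field_simps)
  finally show False by simp
qed

lemma sum_inner_diff_right: "sum_inner I z (\<lambda>i. a i - b i) = sum_inner I z a - sum_inner I z b"
  unfolding sum_inner_def by (simp add: inner_diff_right sum_subtractf)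

lemma sum_sqnorm_eq_sum_inner: "sum_sqnorm I z = sum_inner I z z"
  unfolding sum_sqnorm_def sum_inner_def by (simp add: power2_norm_eq_inner)

lemma approx_if_weak_approx:
  fixes t :: "'i \<Rightarrow> 'h::{real_inner,complete_space}"
  assumes I: "finite I" and W0: "(\<lambda>i. 0) \<in> W"
    and Wadd: "\<And>u v. u \<in> W \<Longrightarrow> v \<in> W \<Longrightarrow> (\<lambda>i. u i + v i) \<in> W"
    and Wsc: "\<And>u c. u \<in> W \<Longrightarrow> (\<lambda>i. c *\<^sub>R u i) \<in> W"
    and weak: "\<And>z e. e > 0 \<Longrightarrow> \<exists>v\<in>W. \<bar>sum_inner I z (\<lambda>i. t i - v i)\<bar> \<le> e"
    and e: "e > 0"
  shows "\<exists>v\<in>W. \<forall>i\<in>I. norm (t i - v i) < e"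
proof -
  obtain w where w1: "\<forall>e>0. \<exists>v\<in>W. sum_sqnorm I (\<lambda>i. w i - v i) < e"
    and w2: "\<forall>v\<in>W. sum_inner I (\<lambda>i. t i - w i) v = 0"
    using orthogonal_projection_exists[OF I W0 Wadd Wsc, of t] by blast
  define z where "z = (\<lambda>i. t i - w i)"
  have orth: "sum_inner I z u = sum_inner I z (\<lambda>i. u i - v i)" if "v \<in> W" for u v
    using w2 that sum_inner_diff_right[of I z u v] unfolding z_def by simp
  have zw: "sum_inner I z w = 0"
  proof (rule eq_0_if_abs_le_all[of "sqrt (sum_sqnorm I z)"])
    fix e :: real assume "e > 0"
    then have "e\<^sup>2 > 0" by simp
    then obtain v where v: "v \<in> W" "sum_sqnorm I (\<lambda>i. w i - v i) < e\<^sup>2" using w1 by blast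
    have "\<bar>sum_inner I z w\<bar> \<le> sqrt (sum_sqnorm I z) * sqrt (sum_sqnorm I (\<lambda>i. w i - v i))"
      using orth[OF v(1)] sum_inner_Cauchy_Schwarz by metis
    also have "\<dots> \<le> sqrt (sum_sqnorm I z) * e"
      using v(2) \<open>e > 0\<close> real_sqrt_less_mono[OF v(2)]
      by (intro mult_left_mono) (auto simp: less_imp_le sum_sqnorm_nonneg)
    finally show "\<bar>sum_inner I z w\<bar> \<le> sqrt (sum_sqnorm I z) * e" .
  qed (simp add: sum_sqnorm_nonneg)
  have zt: "sum_inner I z t = 0"
  proof (rule eq_0_if_abs_le_all[of 1])
    fix e :: real assume "e > 0"
    then obtain v where v: "v \<in> W" "\<bar>sum_inner I z (\<lambda>i. t i - v i)\<bar> \<le> e" using weak by blast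
    then show "\<bar>sum_inner I z t\<bar> \<le> 1 * e" using orth[OF v(1), of t] by simp
  qed simp
  have "sum_sqnorm I z = 0"
    using zw zt sum_inner_diff_right[of I z t w] unfolding sum_sqnorm_eq_sum_inner by (simp add: z_def)
  then have tw: "t i = w i" if "i \<in> I" for i
    using that I unfolding sum_sqnorm_def z_def by (simp add: sum_nonneg_eq_0_iff)
  have "e\<^sup>2 > 0" using e by simp
  then obtain v where v: "v \<in> W" "sum_sqnorm I (\<lambda>i. w i - v i) < e\<^sup>2" using w1 by blast
  have "norm (t i - v i) < e" if "i \<in> I" for i
  proof (rule power2_less_imp_less)
    show "(norm (t i - v i))\<^sup>2 < e\<^sup>2"
      using norm_sq_le_sum_sqnorm[OF I that, of "\<lambda>i. w i - v i"] v(2) tw[OF that] by simp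
  qed (use e in simp)
  then show ?thesis using v(1) by blast
qed

section \<open>Riesz representation\<close>

text \<open>The projection lemma is used with the one-point index type \<open>unit\<close>, i.e.\ in \<open>H\<close> itself.\<close>

lemma riesz_representation:
  fixes f :: "'h::{real_inner,complete_space} \<Rightarrow> real"
  assumes f: "bounded_linear f"
  shows "\<exists>w. \<forall>x. f x = inner x w"
proof (cases "\<forall>x. f x = 0")
  case True then show ?thesis by (intro exI[of _ 0]) simp
next
  case False
  interpret f: bounded_linear f by (rule f)
  obtain a0 where a0: "f a0 \<noteq> 0" using False by blast
  define a where "a = (1 / f a0) *\<^sub>R a0"
  have fa: "f a = 1" unfolding a_def using a0 by (simp add: f.scale)
  define W where "W = {u :: unit \<Rightarrow> 'h. f (u ()) = 0}"
  have W0: "(\<lambda>i. 0) \<in> W" unfolding W_def by simp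
  have Wadd: "\<And>u v. u \<in> W \<Longrightarrow> v \<in> W \<Longrightarrow> (\<lambda>i. u i + v i) \<in> W" unfolding W_def by (simp add: f.add)
  have Wsc: "\<And>u c. u \<in> W \<Longrightarrow> (\<lambda>i. c *\<^sub>R u i) \<in> W" unfolding W_def by (simp add: f.scale)
  have fin: "finite (UNIV :: unit set)" by simp
  obtain w where w1: "\<forall>e>0. \<exists>v\<in>W. sum_sqnorm UNIV (\<lambda>i. w i - v i) < e"
    and w2: "\<forall>v\<in>W. sum_inner UNIV (\<lambda>i. a - w i) v = 0"
    using orthogonal_projection_exists[OF fin W0 Wadd Wsc, of "\<lambda>i. a"] by blast
  have cl: "closed {x. f x = 0}"
    by (intro closed_Collect_eq continuous_on_const) (simp add: linear_continuous_on f)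
  have "w () \<in> closure {x. f x = 0}"
  proof (subst closure_approachable, intro allI impI)
    fix e :: real assume e: "e > 0"
    have "e^2 > 0" using e by simp
    then obtain v where v: "v \<in> W" "sum_sqnorm UNIV (\<lambda>i. w i - v i) < e^2" using w1 by blast
    have "(norm (w () - v ()))^2 < e^2" using v(2) unfolding sum_sqnorm_def by (simp add: UNIV_unit)
    then have "norm (w () - v ()) < e" using e by (smt (verit) power_mono norm_ge_zero)
    then show "\<exists>y\<in>{x. f x = 0}. dist y (w ()) < e" using v(1) unfolding W_def
      by (intro bexI[of _ "v ()"]) (auto simp: dist_norm norm_minus_commute)
  qed
  then have fw: "f (w ()) = 0" using cl closure_closed by blast
  define z where "z = a - w ()"
  have fz: "f z = 1" unfolding z_def using fa fw by (simp add: f.diff)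
  have orth: "inner z k = 0" if "f k = 0" for k
    using w2[rule_format, of "\<lambda>_. k"] that unfolding W_def sum_inner_def z_def by (simp add: UNIV_unit)
  have z0: "z \<noteq> 0" using fz by auto
  have rep: "f x = inner x ((1 / (inner z z)) *\<^sub>R z)" for x
  proof -
    have "f (x - f x *\<^sub>R z) = 0" using fz by (simp add: f.diff f.scale)
    then have "inner z (x - f x *\<^sub>R z) = 0" by (rule orth)
    then have "inner z x = f x * inner z z" by (simp add: inner_diff_right)
    then show ?thesis using z0 by (simp add: inner_commute)
  qed
  then show ?thesis by blast
qed

lemma is_adjoint_exists:
  fixes T :: "'h::{real_inner,complete_space} \<Rightarrow>\<^sub>L 'h"
  shows "\<exists>S. is_adjoint T S"
proof -
  have "\<forall>y. \<exists>w. \<forall>x. inner (blinfun_apply T x) y = inner x w"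
  proof
    fix y
    have "bounded_linear (\<lambda>x. inner (blinfun_apply T x) y)"
      by (intro bounded_linear_compose[OF bounded_linear_inner_left] blinfun.bounded_linear_right)
    then show "\<exists>w. \<forall>x. inner (blinfun_apply T x) y = inner x w" by (rule riesz_representation)
  qed
  then obtain g where g: "\<And>x y. inner (blinfun_apply T x) y = inner x (g y)" by metis
  have uniq: "a = b" if "\<And>x. inner x a = inner x b" for a b :: 'h
  proof -
    have "inner (a - b) a = inner (a - b) b" using that by blast
    then have "inner (a - b) (a - b) = 0" by (simp add: inner_diff_right)
    then show ?thesis by simp
  qed
  have ga: "g (y1 + y2) = g y1 + g y2" for y1 y2
    by (rule uniq) (simp add: g[symmetric] inner_add_right)
  have gs: "g (r *\<^sub>R y) = r *\<^sub>R g y" for r y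
    by (rule uniq) (simp add: g[symmetric])
  have gb: "norm (g y) \<le> norm y * norm T" for y
    using norm_le_if_inner_represents[of T y "g y"] g by (simp add: mult.commute)
  have bl: "bounded_linear g" by (rule bounded_linear_intro[OF ga gs gb])
  have "is_adjoint T (Blinfun g)"
    unfolding is_adjoint_def using bounded_linear_Blinfun_apply[OF bl] g by simp
  then show ?thesis by blast
qed

section \<open>Strong-\<open>*\<close> approximation from the weak closure\<close>

definition adjoint_pair_values :: "('h::{real_inner,complete_space} \<Rightarrow>\<^sub>L 'h) set \<Rightarrow> ('h + 'h \<Rightarrow> 'h) set" where
  "adjoint_pair_values B =
     {case_sum (blinfun_apply S) (blinfun_apply Ss) | S Ss. S \<in> B \<and> Ss \<in> B \<and> is_adjoint S Ss}"

lemma adjoint_pair_values_subspace: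
  assumes B: "real_star_algebra B"
  shows "(\<lambda>i. 0) \<in> adjoint_pair_values B"
    and "u \<in> adjoint_pair_values B \<Longrightarrow> v \<in> adjoint_pair_values B \<Longrightarrow> (\<lambda>i. u i + v i) \<in> adjoint_pair_values B"
    and "u \<in> adjoint_pair_values B \<Longrightarrow> (\<lambda>i. c *\<^sub>R u i) \<in> adjoint_pair_values B"
proof -
  have B0: "0 \<in> B" and Badd: "\<And>S T. S \<in> B \<Longrightarrow> T \<in> B \<Longrightarrow> S + T \<in> B"
    and Bsc: "\<And>r T. T \<in> B \<Longrightarrow> r *\<^sub>R T \<in> B"
    using B unfolding real_star_algebra_def by auto
  have "(\<lambda>i. 0) = case_sum (blinfun_apply 0) (blinfun_apply 0)" by (auto split: sum.split)
  then show "(\<lambda>i. 0) \<in> adjoint_pair_values B"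
    unfolding adjoint_pair_values_def using B0 is_adjoint_zero by blast
  show "(\<lambda>i. u i + v i) \<in> adjoint_pair_values B"
    if u: "u \<in> adjoint_pair_values B" and v: "v \<in> adjoint_pair_values B"
  proof -
    obtain S1 Ss1 where 1: "u = case_sum (blinfun_apply S1) (blinfun_apply Ss1)" "S1 \<in> B" "Ss1 \<in> B" "is_adjoint S1 Ss1"
      using u unfolding adjoint_pair_values_def by blast
    obtain S2 Ss2 where 2: "v = case_sum (blinfun_apply S2) (blinfun_apply Ss2)" "S2 \<in> B" "Ss2 \<in> B" "is_adjoint S2 Ss2"
      using v unfolding adjoint_pair_values_def by blast
    have "(\<lambda>i. u i + v i) = case_sum (blinfun_apply (S1 + S2)) (blinfun_apply (Ss1 + Ss2))"
      unfolding 1 2 by (auto split: sum.split simp: plus_blinfun.rep_eq)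
    then show ?thesis unfolding adjoint_pair_values_def using 1 2 Badd is_adjoint_add by blast
  qed
  show "(\<lambda>i. c *\<^sub>R u i) \<in> adjoint_pair_values B" if u: "u \<in> adjoint_pair_values B"
  proof -
    obtain S Ss where 1: "u = case_sum (blinfun_apply S) (blinfun_apply Ss)" "S \<in> B" "Ss \<in> B" "is_adjoint S Ss"
      using u unfolding adjoint_pair_values_def by blast
    have "(\<lambda>i. c *\<^sub>R u i) = case_sum (blinfun_apply (c *\<^sub>R S)) (blinfun_apply (c *\<^sub>R Ss))"
      unfolding 1 by (auto split: sum.split simp: scaleR_blinfun.rep_eq)
    then show ?thesis unfolding adjoint_pair_values_def using 1 Bsc is_adjoint_scaleR by blast
  qed
qed

lemma weak_closure_strong_star_approx:
  fixes Z Zs :: "'h::{real_inner,complete_space} \<Rightarrow>\<^sub>L 'h"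
  assumes B: "real_star_algebra B" and Z: "Z \<in> weak_closure B" and adj: "is_adjoint Z Zs"
    and P: "finite P" and Q: "finite Q" and e: "e > 0"
  shows "\<exists>S\<in>B. \<exists>Ss\<in>B. is_adjoint S Ss \<and> (\<forall>x\<in>P. norm (blinfun_apply (Z - S) x) < e) \<and>
           (\<forall>y\<in>Q. norm (blinfun_apply (Zs - Ss) y) < e)"
proof -
  define t where "t = case_sum (blinfun_apply Z) (blinfun_apply Zs)"
  define I where "I = Inl ` P \<union> Inr ` Q"
  have I: "finite I" unfolding I_def using P Q by simp
  have weak: "\<exists>v\<in>adjoint_pair_values B. \<bar>sum_inner I z (\<lambda>i. t i - v i)\<bar> \<le> e'" if e': "e' > 0" for z e'
  proof -
    define \<delta> where "\<delta> = e' / (real (card I) + 1)"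
    have \<delta>: "\<delta> > 0" unfolding \<delta>_def using e' by simp
    define F where "F = (\<lambda>i. case i of Inl x \<Rightarrow> (x, z i) | Inr y \<Rightarrow> (z i, y)) ` I"
    obtain S where S: "S \<in> B" "\<forall>(x,y)\<in>F. \<bar>inner (blinfun_apply (Z - S) x) y\<bar> < \<delta>"
      using weak_closureD[OF Z _ \<delta>, of F] I unfolding F_def by blast
    obtain Ss where Ss: "Ss \<in> B" "is_adjoint S Ss" using B S(1) unfolding real_star_algebra_def by blast
    define v where "v = case_sum (blinfun_apply S) (blinfun_apply Ss)"
    have ad: "is_adjoint (Z - S) (Zs - Ss)" by (rule is_adjoint_diff[OF adj Ss(2)])
    have each: "\<bar>inner (z i) (t i - v i)\<bar> \<le> \<delta>" if i: "i \<in> I" for i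
    proof (cases i)
      case (Inl x)
      have "(x, z i) \<in> F" unfolding F_def using i Inl by force
      then show ?thesis using S(2) unfolding t_def v_def Inl
        by (force simp: inner_commute minus_blinfun.rep_eq)
    next
      case (Inr y)
      have "(z i, y) \<in> F" unfolding F_def using i Inr by force
      then have "\<bar>inner (blinfun_apply (Z - S) (z i)) y\<bar> < \<delta>" using S(2) by blast
      moreover have "inner (blinfun_apply (Z - S) (z i)) y = inner (z i) (blinfun_apply (Zs - Ss) y)"
        using ad unfolding is_adjoint_def by blast
      ultimately show ?thesis unfolding t_def v_def Inr by (simp add: minus_blinfun.rep_eq)
    qed
    have "\<bar>sum_inner I z (\<lambda>i. t i - v i)\<bar> \<le> (\<Sum>i\<in>I. \<bar>inner (z i) (t i - v i)\<bar>)"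
      unfolding sum_inner_def by (rule sum_abs)
    also have "\<dots> \<le> real (card I) * \<delta>" using sum_mono[of I _ "\<lambda>_. \<delta>", OF each] by simp
    also have "\<dots> \<le> e'" unfolding \<delta>_def using e' by (simp add: field_simps)
    finally show ?thesis unfolding adjoint_pair_values_def v_def using S(1) Ss by blast
  qed
  obtain v where "v \<in> adjoint_pair_values B" and v: "\<forall>i\<in>I. norm (t i - v i) < e"
    using approx_if_weak_approx[OF I adjoint_pair_values_subspace[OF B] weak e] by blast
  then obtain S Ss where SS: "v = case_sum (blinfun_apply S) (blinfun_apply Ss)" "S \<in> B" "Ss \<in> B" "is_adjoint S Ss"
    unfolding adjoint_pair_values_def by blast
  have "\<forall>x\<in>P. norm (blinfun_apply (Z - S) x) < e" "\<forall>y\<in>Q. norm (blinfun_apply (Zs - Ss) y) < e"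
    using v unfolding I_def SS(1) t_def by (force simp: minus_blinfun.rep_eq)+
  then show ?thesis using SS by blast
qed

section \<open>Positive operators and the Neumann series\<close>

lemmas blinfun_apply_simps = plus_blinfun.rep_eq minus_blinfun.rep_eq scaleR_blinfun.rep_eq blinfun_apply_blinfun_compose
  blinfun.add_right blinfun.diff_right blinfun.scaleR_right blinfun.zero_right zero_blinfun.rep_eq

lemma positive_form_Cauchy_Schwarz:
  fixes R :: "'h::{real_inner,complete_space} \<Rightarrow>\<^sub>L 'h"
  assumes sym: "is_adjoint R R" and pos: "\<And>x. inner (blinfun_apply R x) x \<ge> 0"
  shows "(inner (blinfun_apply R x) y)^2 \<le> inner (blinfun_apply R x) x * inner (blinfun_apply R y) y"
proof -
  define a where "a = inner (blinfun_apply R x) x"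
  define b where "b = inner (blinfun_apply R x) y"
  define c where "c = inner (blinfun_apply R y) y"
  have ba: "inner (blinfun_apply R y) x = b"
    unfolding b_def using sym unfolding is_adjoint_def by (metis inner_commute)
  have q: "0 \<le> a + 2 * l * b + l^2 * c" for l
  proof -
    have "0 \<le> inner (blinfun_apply R (x + l *\<^sub>R y)) (x + l *\<^sub>R y)" by (rule pos)
    also have "\<dots> = a + 2 * l * b + l^2 * c"
      unfolding a_def b_def c_def using ba[unfolded b_def]
      by (simp add: blinfun.add_right blinfun.scaleR_right inner_add_left inner_add_right power2_eq_square algebra_simps)
    finally show ?thesis .
  qed
  have c0: "c \<ge> 0" unfolding c_def by (rule pos)
  have a0: "a \<ge> 0" unfolding a_def by (rule pos)
  show ?thesis
  proof (cases "c = 0")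
    case True
    have "b = 0"
    proof (rule ccontr)
      assume "b \<noteq> 0"
      have "0 \<le> a + 2 * (- (a + 1) / (2 * b)) * b" using q[of "- (a + 1) / (2 * b)"] True by simp
      also have "\<dots> = -1" using \<open>b \<noteq> 0\<close> by (simp add: field_simps)
      finally show False by simp
    qed
    then show ?thesis unfolding a_def[symmetric] b_def[symmetric] c_def[symmetric] using True by simp
  next
    case False
    then have cp: "c > 0" using c0 by simp
    have "0 \<le> a + 2 * (- b / c) * b + (- b / c)^2 * c" by (rule q)
    also have "\<dots> = a - b^2 / c" using cp by (simp add: field_simps power2_eq_square)
    finally have "b^2 / c \<le> a" by simp
    then have "b^2 \<le> a * c" using cp by (simp add: pos_divide_le_eq)
    then show ?thesis unfolding a_def[symmetric] b_def[symmetric] c_def[symmetric] .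
  qed
qed

lemma norm_le_if_positive_form_le:
  fixes R :: "'h::{real_inner,complete_space} \<Rightarrow>\<^sub>L 'h"
  assumes sym: "is_adjoint R R" and pos: "\<And>x. inner (blinfun_apply R x) x \<ge> 0"
    and up: "\<And>x. inner (blinfun_apply R x) x \<le> q * (norm x)^2" and q: "q \<ge> 0"
  shows "norm R \<le> q"
proof (rule norm_blinfun_bound[OF q])
  fix x
  define y where "y = blinfun_apply R x"
  have "((norm y)^2)^2 = (inner y y)^2" by (simp add: power2_norm_eq_inner)
  also have "(inner y y)^2 \<le> inner y x * inner (blinfun_apply R y) y"
    using positive_form_Cauchy_Schwarz[OF sym pos, of x y] unfolding y_def by simp
  also have "\<dots> \<le> (q * (norm x)^2) * (q * (norm y)^2)"
  proof (rule mult_mono)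
    show "inner y x \<le> q * (norm x)^2" unfolding y_def by (rule up)
    show "inner (blinfun_apply R y) y \<le> q * (norm y)^2" by (rule up)
    show "0 \<le> q * (norm x)^2" using q by simp
    show "0 \<le> inner (blinfun_apply R y) y" by (rule pos)
  qed
  finally have h0: "((norm y)^2)^2 \<le> (q * (norm x)^2) * (q * (norm y)^2)" .
  have eqr: "(q * (norm x)^2) * (q * (norm y)^2) = (q * norm x)^2 * (norm y)^2"
    by (simp add: power_mult_distrib power2_eq_square)
  have h: "(norm y)^2 * (norm y)^2 \<le> (q * norm x)^2 * (norm y)^2"
  proof -
    have "(norm y)^2 * (norm y)^2 = ((norm y)^2)^2" by (rule power2_eq_square[symmetric])
    then show ?thesis using h0 eqr by simp
  qed
  show "norm y \<le> q * norm x"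
  proof (cases "norm y = 0")
    case True then show ?thesis using q by simp
  next
    case False
    then have "(norm y)^2 > 0" by simp
    with h have "(norm y)^2 \<le> (q * norm x)^2" by (rule mult_right_le_imp_le)
    then show ?thesis by (rule power2_le_imp_le) (simp add: q)
  qed
qed

primrec blinfun_power :: "('h::real_normed_vector \<Rightarrow>\<^sub>L 'h) \<Rightarrow> nat \<Rightarrow> ('h \<Rightarrow>\<^sub>L 'h)" where
  "blinfun_power R 0 = id_blinfun"
| "blinfun_power R (Suc k) = blinfun_power R k o\<^sub>L R"

lemma norm_blinfun_power_le: "norm (blinfun_power R k) \<le> (norm R)^k"
proof (induction k)
  case 0 then show ?case by (simp add: norm_blinfun_id_le)
next
  case (Suc k)
  have "norm (blinfun_power R (Suc k)) \<le> norm (blinfun_power R k) * norm R" by (simp add: norm_blinfun_compose)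
  also have "\<dots> \<le> (norm R)^k * norm R" using Suc by (simp add: mult_right_mono)
  finally show ?case by (simp add: mult.commute)
qed

lemma blinfun_power_commute: "R o\<^sub>L blinfun_power R k = blinfun_power R k o\<^sub>L R"
  by (induction k) (auto intro!: blinfun_eqI simp: blinfun_apply_blinfun_compose, metis blinfun_apply_blinfun_compose)

lemma bounded_linear_blinfun_compose_left: "bounded_linear (\<lambda>Y. Y o\<^sub>L (R::'h::real_normed_vector \<Rightarrow>\<^sub>L 'h))"
  by (rule bounded_bilinear.bounded_linear_left[OF bounded_bilinear_blinfun_compose])
lemma bounded_linear_blinfun_compose_right: "bounded_linear (\<lambda>Y. (R::'h::real_normed_vector \<Rightarrow>\<^sub>L 'h) o\<^sub>L Y)"
  by (rule bounded_bilinear.bounded_linear_right[OF bounded_bilinear_blinfun_compose])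

lemma tendsto_blinfun_if_Cauchy_pointwise:
  fixes T :: "nat \<Rightarrow> ('a::real_normed_vector \<Rightarrow>\<^sub>L 'b::real_normed_vector)"
  assumes C: "Cauchy T" and lim: "\<And>x. (\<lambda>n. blinfun_apply (T n) x) \<longlonglongrightarrow> blinfun_apply L x"
  shows "T \<longlonglongrightarrow> L"
proof (rule LIMSEQ_I)
  fix e :: real assume e: "e > 0"
  obtain M where M: "\<forall>m\<ge>M. \<forall>n\<ge>M. dist (T m) (T n) < e/2"
    using metric_CauchyD[OF C, of "e/2"] e by auto
  have "norm (T n - L) \<le> e/2" if n: "n \<ge> M" for n
  proof (rule norm_blinfun_bound)
    show "0 \<le> e/2" using e by simp
    fix x
    have "(\<lambda>m. norm (blinfun_apply (T n) x - blinfun_apply (T m) x))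
        \<longlonglongrightarrow> norm (blinfun_apply (T n) x - blinfun_apply L x)"
      by (intro tendsto_intros lim)
    moreover have "norm (blinfun_apply (T n) x - blinfun_apply (T m) x) \<le> e/2 * norm x" if "m \<ge> M" for m
    proof -
      have "norm (blinfun_apply (T n) x - blinfun_apply (T m) x) \<le> norm (T n - T m) * norm x"
        by (metis blinfun.diff_left norm_blinfun)
      also have "\<dots> \<le> e/2 * norm x"
        using M n that by (intro mult_right_mono) (auto simp: dist_norm less_imp_le)
      finally show ?thesis .
    qed
    ultimately have "norm (blinfun_apply (T n) x - blinfun_apply L x) \<le> e/2 * norm x"
      by (intro LIMSEQ_le_const2) auto
    then show "norm (blinfun_apply (T n - L) x) \<le> e/2 * norm x"
      by (simp add: blinfun.diff_left)
  qed
  then have "norm (T n - L) < e" if "n \<ge> M" for n using e that by fastforce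
  then show "\<exists>no. \<forall>n\<ge>no. norm (T n - L) < e" by blast
qed

text \<open>The library's completeness of \<open>'a \<Rightarrow>\<^sub>L 'b\<close> requires \<open>'b\<close> of sort \<open>banach\<close>, which the sort
  \<open>{real_inner, complete_space}\<close> of the Hilbert space is not; hence the direct proof.\<close>

lemma blinfun_Cauchy_convergent:
  fixes T :: "nat \<Rightarrow> ('h::{real_normed_vector,complete_space} \<Rightarrow>\<^sub>L 'h)"
  assumes C: "Cauchy T"
  shows "\<exists>L. T \<longlonglongrightarrow> L"
proof -
  define f where "f x = lim (\<lambda>n. blinfun_apply (T n) x)" for x
  have fl: "(\<lambda>n. blinfun_apply (T n) x) \<longlonglongrightarrow> f x" for x
    using bounded_linear.Cauchy[OF blinfun.bounded_linear_left C, of x]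
    unfolding f_def by (simp add: Cauchy_convergent_iff convergent_LIMSEQ_iff)
  obtain K where K: "\<And>n. norm (T n) \<le> K" using Cauchy_Bseq[OF C] BseqE by metis
  have "bounded_linear f"
  proof (rule bounded_linear_intro)
    show "f (x + y) = f x + f y" for x y
      by (rule LIMSEQ_unique[OF fl]) (simp add: blinfun.add_right tendsto_add fl)
    show "f (r *\<^sub>R x) = r *\<^sub>R f x" for r x
      by (rule LIMSEQ_unique[OF fl]) (simp add: blinfun.scaleR_right tendsto_scaleR fl)
    show "norm (f x) \<le> norm x * K" for x
      using K by (intro LIMSEQ_le_const2[OF tendsto_norm[OF fl]])
        (metis mult.commute mult_left_mono norm_blinfun norm_ge_zero order_trans)
  qed
  then have "T \<longlonglongrightarrow> Blinfun f"
    using fl by (intro tendsto_blinfun_if_Cauchy_pointwise[OF C]) (simp add: bounded_linear_Blinfun_apply)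
  then show ?thesis by blast
qed

lemma summable_blinfun_if_summable_norm:
  fixes f :: "nat \<Rightarrow> ('h::{real_normed_vector,complete_space} \<Rightarrow>\<^sub>L 'h)"
  assumes sn: "summable (\<lambda>n. norm (f n))"
  shows "summable f"
proof -
  define S where "S n = (\<Sum>i<n. f i)" for n
  have key: "\<forall>e>0. \<exists>N. \<forall>m\<ge>N. \<forall>n. norm (sum (\<lambda>n. norm (f n)) {m..<n}) < e"
    using sn unfolding summable_Cauchy by blast
  have d: "norm (S n - S m) < e" if "m \<ge> N" "n \<ge> m" "\<forall>m\<ge>N. \<forall>n. norm (sum (\<lambda>n. norm (f n)) {m..<n}) < e" for m n N e
  proof -
    have "S n - S m = sum f {m..<n}"
      unfolding S_def using sum_diff_nat_ivl[of 0 m n f] that by (simp add: atLeast0LessThan)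
    then have "norm (S n - S m) \<le> sum (\<lambda>n. norm (f n)) {m..<n}" by (simp add: norm_sum)
    also have "\<dots> \<le> norm (sum (\<lambda>n. norm (f n)) {m..<n})" by simp
    also have "\<dots> < e" using that by blast
    finally show ?thesis .
  qed
  have "Cauchy S"
  proof (rule metric_CauchyI)
    fix e :: real assume "e > 0"
    then obtain N where N: "\<forall>m\<ge>N. \<forall>n. norm (sum (\<lambda>n. norm (f n)) {m..<n}) < e" using key by blast
    have "dist (S m) (S n) < e" if "m \<ge> N" "n \<ge> N" for m n
    proof (cases "m \<le> n")
      case True then show ?thesis using d[OF that(1) True N] by (simp add: dist_norm norm_minus_commute)
    next
      case False then show ?thesis using d[OF that(2) _ N, of m] by (simp add: dist_norm)
    qed
    then show "\<exists>M. \<forall>m\<ge>M. \<forall>n\<ge>M. dist (S m) (S n) < e" by blast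
  qed
  then obtain L where "S \<longlonglongrightarrow> L" using blinfun_Cauchy_convergent by blast
  then have "f sums L" unfolding sums_def S_def by simp
  then show ?thesis by (rule sums_summable)
qed

lemma neumann_series:
  fixes R :: "'h::{real_inner,complete_space} \<Rightarrow>\<^sub>L 'h"
  assumes R: "norm R < 1"
  shows "summable (blinfun_power R) \<and> suminf (blinfun_power R) o\<^sub>L (id_blinfun - R) = id_blinfun \<and>
         (id_blinfun - R) o\<^sub>L suminf (blinfun_power R) = id_blinfun"
proof -
  have sm: "summable (blinfun_power R)"
  proof (rule summable_blinfun_if_summable_norm)
    show "summable (\<lambda>n. norm (blinfun_power R n))"
      by (rule summable_comparison_test'[of "\<lambda>n. (norm R)^n" 0]) (use R norm_blinfun_power_le in auto)
  qed
  define Q where "Q = suminf (blinfun_power R)"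
  have s1: "Q o\<^sub>L R = Q - id_blinfun"
  proof -
    have "Q o\<^sub>L R = (\<Sum>k. blinfun_power R k o\<^sub>L R)" unfolding Q_def by (rule bounded_linear.suminf[OF bounded_linear_blinfun_compose_left sm])
    also have "\<dots> = (\<Sum>k. blinfun_power R (Suc k))" by simp
    also have "\<dots> = Q - id_blinfun" unfolding Q_def using suminf_split_head[OF sm] by simp
    finally show ?thesis .
  qed
  have s2: "R o\<^sub>L Q = Q - id_blinfun"
  proof -
    have "R o\<^sub>L Q = (\<Sum>k. R o\<^sub>L blinfun_power R k)" unfolding Q_def by (rule bounded_linear.suminf[OF bounded_linear_blinfun_compose_right sm])
    also have "\<dots> = (\<Sum>k. blinfun_power R k o\<^sub>L R)" by (simp add: blinfun_power_commute)
    also have "\<dots> = Q o\<^sub>L R" unfolding Q_def by (rule bounded_linear.suminf[OF bounded_linear_blinfun_compose_left sm, symmetric])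
    finally show ?thesis using s1 by simp
  qed
  have "Q o\<^sub>L (id_blinfun - R) = Q - (Q o\<^sub>L R)"
    by (rule blinfun_eqI) (simp add: blinfun_apply_simps)
  then have e1: "Q o\<^sub>L (id_blinfun - R) = id_blinfun" using s1 by simp
  have "(id_blinfun - R) o\<^sub>L Q = Q - (R o\<^sub>L Q)"
    by (rule blinfun_eqI) (simp add: blinfun_apply_simps)
  then have e2: "(id_blinfun - R) o\<^sub>L Q = id_blinfun" using s2 by simp
  show ?thesis using sm e1 e2 unfolding Q_def by simp
qed

lemma compose_suminf_blinfun_power_mem:
  fixes R S :: "'h::{real_inner,complete_space} \<Rightarrow>\<^sub>L 'h"
  assumes B: "real_star_algebra B" and S: "S \<in> B" and sm: "summable (blinfun_power R)"
    and right: "\<And>Y. Y \<in> B \<Longrightarrow> Y o\<^sub>L R \<in> B"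
  shows "S o\<^sub>L suminf (blinfun_power R) \<in> B"
proof -
  have B0: "0 \<in> B" and Badd: "\<And>S T. S \<in> B \<Longrightarrow> T \<in> B \<Longrightarrow> S + T \<in> B" and "closed B"
    using B unfolding real_star_algebra_def by auto
  have power: "S o\<^sub>L blinfun_power R k \<in> B" for k
  proof (induction k)
    case 0
    have "S o\<^sub>L blinfun_power R 0 = S" by (intro blinfun_eqI) simp
    then show ?case using S by simp
  next
    case (Suc k)
    have "S o\<^sub>L blinfun_power R (Suc k) = (S o\<^sub>L blinfun_power R k) o\<^sub>L R" by (intro blinfun_eqI) simp
    then show ?case using right[OF Suc] by simp
  qed
  have partial: "(\<Sum>i<n. S o\<^sub>L blinfun_power R i) \<in> B" for n
    by (induction n) (simp_all add: B0 Badd power)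
  have "(\<lambda>n. \<Sum>i<n. S o\<^sub>L blinfun_power R i) \<longlonglongrightarrow> (\<Sum>k. S o\<^sub>L blinfun_power R k)"
    by (rule summable_LIMSEQ[OF bounded_linear.summable[OF bounded_linear_blinfun_compose_right sm]])
  moreover have "(\<Sum>k. S o\<^sub>L blinfun_power R k) = S o\<^sub>L suminf (blinfun_power R)"
    by (rule bounded_linear.suminf[OF bounded_linear_blinfun_compose_right sm, symmetric])
  ultimately show ?thesis using closed_sequentially[OF \<open>closed B\<close>] partial by metis
qed

definition inverse_id_plus :: "('h::{real_inner,complete_space} \<Rightarrow>\<^sub>L 'h) \<Rightarrow> ('h \<Rightarrow>\<^sub>L 'h)" where
  "inverse_id_plus M = (1 / (1 + norm M)) *\<^sub>R
     suminf (blinfun_power (id_blinfun - (1 / (1 + norm M)) *\<^sub>R (id_blinfun + M)))"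

text \<open>For positive \<open>M\<close> the spectrum of \<open>(1 + M) / (1 + \<parallel>M\<parallel>)\<close> lies in \<open>[1 / (1 + \<parallel>M\<parallel>), 1]\<close>, so the
  Neumann series in the definition converges.\<close>

lemma norm_neumann_factor_less_1:
  fixes M :: "'h::{real_inner,complete_space} \<Rightarrow>\<^sub>L 'h"
  assumes adj: "is_adjoint M M" and pos: "\<And>x. 0 \<le> inner (blinfun_apply M x) x"
  shows "norm (id_blinfun - (1 / (1 + norm M)) *\<^sub>R (id_blinfun + M)) < 1"
proof -
  define c where "c = 1 + norm M"
  have c1: "c \<ge> 1" unfolding c_def by simp
  define R where "R = id_blinfun - (1 / c) *\<^sub>R (id_blinfun + M)"
  have Rx: "inner (blinfun_apply R x) x = (norm x)\<^sup>2 - ((norm x)\<^sup>2 + inner (blinfun_apply M x) x) / c" for x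
    unfolding R_def by (simp add: blinfun_apply_simps inner_diff_left inner_add_left power2_norm_eq_inner
      divide_inverse algebra_simps)
  have Mx: "inner (blinfun_apply M x) x \<le> (c - 1) * (norm x)\<^sup>2" for x
  proof -
    have "inner (blinfun_apply M x) x \<le> norm (blinfun_apply M x) * norm x" by (rule norm_cauchy_schwarz)
    also have "\<dots> \<le> norm M * norm x * norm x" by (simp add: mult_right_mono norm_blinfun)
    finally show ?thesis unfolding c_def by (simp add: power2_eq_square mult.assoc)
  qed
  have "norm R \<le> 1 - 1 / c"
  proof (rule norm_le_if_positive_form_le)
    show "is_adjoint R R" unfolding R_def
      by (intro is_adjoint_diff is_adjoint_id is_adjoint_scaleR is_adjoint_add adj)
    show "0 \<le> inner (blinfun_apply R x) x" for x
    proof -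
      have "((norm x)\<^sup>2 + inner (blinfun_apply M x) x) / c \<le> (c * (norm x)\<^sup>2) / c"
        using Mx[of x] c1 by (intro divide_right_mono) (auto simp: algebra_simps)
      then show ?thesis unfolding Rx using c1 by simp
    qed
    show "inner (blinfun_apply R x) x \<le> (1 - 1 / c) * (norm x)\<^sup>2" for x
    proof -
      have "(norm x)\<^sup>2 / c \<le> ((norm x)\<^sup>2 + inner (blinfun_apply M x) x) / c"
        using c1 pos[of x] by (intro divide_right_mono) auto
      then show ?thesis unfolding Rx by (simp add: algebra_simps)
    qed
  qed (use c1 in simp)
  then show ?thesis using c1 unfolding R_def c_def by (smt (verit) divide_pos_pos)
qed

lemma inverse_id_plus:
  fixes M :: "'h::{real_inner,complete_space} \<Rightarrow>\<^sub>L 'h"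
  assumes "is_adjoint M M" and "\<And>x. 0 \<le> inner (blinfun_apply M x) x"
  shows "(id_blinfun + M) o\<^sub>L inverse_id_plus M = id_blinfun"
    and "inverse_id_plus M o\<^sub>L (id_blinfun + M) = id_blinfun"
proof -
  define c where "c = 1 + norm M"
  have c: "c > 0" unfolding c_def by (simp add: add_pos_nonneg)
  define R where "R = id_blinfun - (1 / c) *\<^sub>R (id_blinfun + M)"
  have "norm R < 1" unfolding R_def c_def by (rule norm_neumann_factor_less_1[OF assms])
  note N = neumann_series[OF this]
  have idR: "id_blinfun + M = c *\<^sub>R (id_blinfun - R)" unfolding R_def using c by simp
  have P: "inverse_id_plus M = (1 / c) *\<^sub>R suminf (blinfun_power R)"
    unfolding inverse_id_plus_def R_def c_def ..
  show "(id_blinfun + M) o\<^sub>L inverse_id_plus M = id_blinfun"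
  proof -
    have "(id_blinfun + M) o\<^sub>L inverse_id_plus M = (id_blinfun - R) o\<^sub>L suminf (blinfun_power R)"
      unfolding idR P using c by (intro blinfun_eqI) (simp add: blinfun_apply_simps scaleR_diff_right)
    then show ?thesis using N by simp
  qed
  show "inverse_id_plus M o\<^sub>L (id_blinfun + M) = id_blinfun"
  proof -
    have "inverse_id_plus M o\<^sub>L (id_blinfun + M) = suminf (blinfun_power R) o\<^sub>L (id_blinfun - R)"
      unfolding idR P using c by (intro blinfun_eqI) (simp add: blinfun_apply_simps scaleR_diff_right)
    then show ?thesis using N by simp
  qed
qed

lemma compose_inverse_id_plus_mem:
  fixes M S :: "'h::{real_inner,complete_space} \<Rightarrow>\<^sub>L 'h"
  assumes B: "real_star_algebra B" and S: "S \<in> B" and M: "M \<in> B"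
    and adj: "is_adjoint M M" and pos: "\<And>x. 0 \<le> inner (blinfun_apply M x) x"
  shows "S o\<^sub>L inverse_id_plus M \<in> B"
proof -
  define c where "c = 1 + norm M"
  define R where "R = id_blinfun - (1 / c) *\<^sub>R (id_blinfun + M)"
  have Badd: "\<And>S T. S \<in> B \<Longrightarrow> T \<in> B \<Longrightarrow> S + T \<in> B" and Bsc: "\<And>r T. T \<in> B \<Longrightarrow> r *\<^sub>R T \<in> B"
    and Bc: "\<And>S T. S \<in> B \<Longrightarrow> T \<in> B \<Longrightarrow> S o\<^sub>L T \<in> B"
    using B unfolding real_star_algebra_def by auto
  have "norm R < 1" unfolding R_def c_def by (rule norm_neumann_factor_less_1[OF adj pos])
  then have "summable (blinfun_power R)" using neumann_series by blast
  moreover have "Y o\<^sub>L R \<in> B" if "Y \<in> B" for Y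
  proof -
    have "Y o\<^sub>L R = Y + (- (1 / c)) *\<^sub>R (Y + (Y o\<^sub>L M))"
      unfolding R_def by (intro blinfun_eqI) (simp add: blinfun_apply_simps algebra_simps)
    also have "\<dots> \<in> B" using that M by (intro Badd Bsc Bc)
    finally show ?thesis .
  qed
  ultimately have "S o\<^sub>L suminf (blinfun_power R) \<in> B"
    by (rule compose_suminf_blinfun_power_mem[OF B S])
  moreover have "S o\<^sub>L inverse_id_plus M = (1 / c) *\<^sub>R (S o\<^sub>L suminf (blinfun_power R))"
    unfolding inverse_id_plus_def R_def c_def by (intro blinfun_eqI) (simp add: blinfun_apply_simps)
  ultimately show ?thesis using Bsc by simp
qed

lemma adjoint_product_positive:
  assumes "is_adjoint S Ss"
  shows "is_adjoint (Ss o\<^sub>L S) (Ss o\<^sub>L S)" and "0 \<le> inner (blinfun_apply (Ss o\<^sub>L S) x) x"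
proof -
  show "is_adjoint (Ss o\<^sub>L S) (Ss o\<^sub>L S)" by (rule is_adjoint_compose[OF is_adjoint_sym[OF assms] assms])
  show "0 \<le> inner (blinfun_apply (Ss o\<^sub>L S) x) x"
    using assms unfolding is_adjoint_def by (metis blinfun_apply_blinfun_compose inner_commute inner_ge_zero)
qed

lemma inverse_id_plus_adjoint_product_apply:
  assumes "is_adjoint S Ss"
  shows "blinfun_apply (inverse_id_plus (Ss o\<^sub>L S)) x
      + blinfun_apply Ss (blinfun_apply S (blinfun_apply (inverse_id_plus (Ss o\<^sub>L S)) x)) = x"
    and "blinfun_apply (inverse_id_plus (Ss o\<^sub>L S)) (x + blinfun_apply Ss (blinfun_apply S x)) = x"
  using arg_cong[OF inverse_id_plus(1)[OF adjoint_product_positive[OF assms]], of "\<lambda>T. blinfun_apply T x"]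
    arg_cong[OF inverse_id_plus(2)[OF adjoint_product_positive[OF assms]], of "\<lambda>T. blinfun_apply T x"]
  by (simp_all add: blinfun_apply_simps)

section \<open>The Kaplansky density theorem\<close>

text \<open>The operator \<open>2 S (1 + S\<^sup>* S)\<^sup>-\<^sup>1\<close> is the image of \<open>S\<close> under \<open>f(t) = 2t / (1 + t\<^sup>2)\<close>; the next
  two lemmas are the operator forms of \<open>|f(t)| \<le> 1\<close> and \<open>t\<^sup>2 / (1 + t\<^sup>2) \<le> 1\<close>.\<close>

lemma norm_transform_apply_le:
  fixes S Ss P :: "'h::{real_inner,complete_space} \<Rightarrow>\<^sub>L 'h"
  assumes adj: "is_adjoint S Ss"
    and P: "\<And>x. blinfun_apply P x + blinfun_apply Ss (blinfun_apply S (blinfun_apply P x)) = x"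
  shows "2 * norm (blinfun_apply S (blinfun_apply P x)) \<le> norm x"
proof -
  define u where "u = blinfun_apply P x"
  define w where "w = blinfun_apply Ss (blinfun_apply S u)"
  have xu: "x = u + w" using P[of x] unfolding u_def w_def by simp
  have uw: "inner u w = (norm (blinfun_apply S u))\<^sup>2"
    using adj unfolding w_def is_adjoint_def by (simp add: power2_norm_eq_inner inner_commute)
  have "(norm x)\<^sup>2 = (norm u)\<^sup>2 + 2 * inner u w + (norm w)\<^sup>2"
    unfolding xu by (simp add: power2_norm_eq_inner inner_add_left inner_add_right inner_commute)
  also have "\<dots> \<ge> 4 * (norm (blinfun_apply S u))\<^sup>2"
  proof -
    have "(norm (blinfun_apply S u))\<^sup>2 \<le> norm u * norm w"
      using norm_cauchy_schwarz[of u w] uw by simp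
    moreover have "2 * (norm u * norm w) \<le> (norm u)\<^sup>2 + (norm w)\<^sup>2"
      using sum_squares_bound[of "norm u" "norm w"] by simp
    ultimately show ?thesis using uw by simp
  qed
  finally have "(2 * norm (blinfun_apply S u))\<^sup>2 \<le> (norm x)\<^sup>2" by (simp add: power_mult_distrib)
  then show ?thesis unfolding u_def by (rule power2_le_imp_le) simp
qed

lemma norm_compose_inverse_adjoint_apply_le:
  fixes S Ss P :: "'h::{real_inner,complete_space} \<Rightarrow>\<^sub>L 'h"
  assumes adj: "is_adjoint S Ss"
    and P: "\<And>x. blinfun_apply P x + blinfun_apply Ss (blinfun_apply S (blinfun_apply P x)) = x"
  shows "norm (blinfun_apply S (blinfun_apply P (blinfun_apply Ss y))) \<le> norm y"
proof -
  define v where "v = blinfun_apply P (blinfun_apply Ss y)"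
  have "(norm (blinfun_apply S v))\<^sup>2 \<le> inner v v + inner v (blinfun_apply Ss (blinfun_apply S v))"
    using adj unfolding is_adjoint_def by (simp add: power2_norm_eq_inner inner_commute)
  also have "\<dots> = inner (blinfun_apply S v) y"
    using P[of "blinfun_apply Ss y"] adj unfolding v_def is_adjoint_def
    by (metis inner_add_left inner_commute)
  also have "\<dots> \<le> norm y * norm (blinfun_apply S v)"
    using norm_cauchy_schwarz[of "blinfun_apply S v" y] by (simp add: mult.commute)
  finally show ?thesis unfolding v_def by (rule le_if_square_le_mult[rotated]) simp
qed

text \<open>Strong continuity of \<open>f\<close>: the error at \<open>x\<close> is controlled by \<open>S - Z\<close> and \<open>S\<^sup>* - Z\<^sup>*\<close> at two vectors
  determined by \<open>Z\<close> and \<open>x\<close>.\<close>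

lemma transform_difference_bound:
  fixes S Ss PS Z Zs PZ :: "'h::{real_inner,complete_space} \<Rightarrow>\<^sub>L 'h"
  assumes adjS: "is_adjoint S Ss"
    and PS1: "\<And>x. blinfun_apply PS x + blinfun_apply Ss (blinfun_apply S (blinfun_apply PS x)) = x"
    and PS2: "\<And>x. blinfun_apply PS (x + blinfun_apply Ss (blinfun_apply S x)) = x"
    and PZ1: "\<And>x. blinfun_apply PZ x + blinfun_apply Zs (blinfun_apply Z (blinfun_apply PZ x)) = x"
  shows "norm (2 *\<^sub>R blinfun_apply S (blinfun_apply PS x) - 2 *\<^sub>R blinfun_apply Z (blinfun_apply PZ x))
     \<le> 4 * norm (blinfun_apply (S - Z) (blinfun_apply PZ x))
       + norm (blinfun_apply (Zs - Ss) (blinfun_apply Z (blinfun_apply PZ x)))"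
proof -
  define u where "u = blinfun_apply PZ x"
  define a where "a = blinfun_apply (Zs - Ss) (blinfun_apply Z u)"
  define b where "b = blinfun_apply (Z - S) u"
  have xu: "x = (u + blinfun_apply Ss (blinfun_apply S u)) + (a + blinfun_apply Ss b)"
    using PZ1[of x] unfolding u_def[symmetric] a_def b_def by (simp add: blinfun_apply_simps algebra_simps)
  have "blinfun_apply PS x = u + blinfun_apply PS a + blinfun_apply PS (blinfun_apply Ss b)"
    by (subst xu, subst blinfun.add_right, subst PS2) (simp add: blinfun.add_right)
  then have "blinfun_apply S (blinfun_apply PS x) =
      blinfun_apply S u + blinfun_apply S (blinfun_apply PS a) + blinfun_apply S (blinfun_apply PS (blinfun_apply Ss b))"
    by (simp add: blinfun.add_right)
  then have eq: "blinfun_apply S (blinfun_apply PS x) - blinfun_apply Z u =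
      (- b) + blinfun_apply S (blinfun_apply PS a) + blinfun_apply S (blinfun_apply PS (blinfun_apply Ss b))"
    unfolding b_def by (simp add: blinfun_apply_simps algebra_simps)
  have n1: "2 * norm (blinfun_apply S (blinfun_apply PS a)) \<le> norm a" by (rule norm_transform_apply_le[OF adjS PS1])
  have n2: "norm (blinfun_apply S (blinfun_apply PS (blinfun_apply Ss b))) \<le> norm b" by (rule norm_compose_inverse_adjoint_apply_le[OF adjS PS1])
  have "norm (blinfun_apply S (blinfun_apply PS x) - blinfun_apply Z u) \<le>
      norm b + norm (blinfun_apply S (blinfun_apply PS a)) + norm (blinfun_apply S (blinfun_apply PS (blinfun_apply Ss b)))"
    unfolding eq by (metis norm_minus_cancel norm_triangle_le order_refl add_mono)
  then have "norm (blinfun_apply S (blinfun_apply PS x) - blinfun_apply Z u) \<le> 2 * norm b + norm a / 2"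
    using n1 n2 by linarith
  moreover have "norm b = norm (blinfun_apply (S - Z) u)" unfolding b_def
    by (metis blinfun.minus_left minus_diff_eq norm_minus_cancel)
  moreover have "2 *\<^sub>R blinfun_apply S (blinfun_apply PS x) - 2 *\<^sub>R blinfun_apply Z u =
      2 *\<^sub>R (blinfun_apply S (blinfun_apply PS x) - blinfun_apply Z u)" by (simp add: scaleR_diff_right)
  ultimately show ?thesis unfolding u_def[symmetric] a_def[symmetric] by simp
qed

lemma convergent_if_geometric_increments:
  fixes f :: "nat \<Rightarrow> ('h::{real_normed_vector,complete_space} \<Rightarrow>\<^sub>L 'h)"
  assumes d: "\<And>n. norm (f (Suc n) - f n) \<le> q^n" and q: "0 \<le> q" "q < 1"
  shows "\<exists>L. f \<longlonglongrightarrow> L"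
proof -
  define g where "g n = f (Suc n) - f n" for n
  have sg: "summable g"
  proof (rule summable_blinfun_if_summable_norm)
    show "summable (\<lambda>n. norm (g n))"
      by (rule summable_comparison_test'[of "\<lambda>n. q^n" 0]) (use q d in \<open>auto simp: g_def\<close>)
  qed
  have "(\<lambda>n. \<Sum>i<n. g i) \<longlonglongrightarrow> suminf g" by (rule summable_LIMSEQ[OF sg])
  moreover have "(\<Sum>i<n. g i) = f n - f 0" for n unfolding g_def by (rule sum_lessThan_telescope)
  ultimately have "(\<lambda>n. f n - f 0) \<longlonglongrightarrow> suminf g" by simp
  then have "(\<lambda>n. (f n - f 0) + f 0) \<longlonglongrightarrow> suminf g + f 0" by (intro tendsto_add tendsto_const)
  then show ?thesis by auto
qed

lemma tendsto_blinfun_compose: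
  fixes A B :: "nat \<Rightarrow> ('h::real_normed_vector \<Rightarrow>\<^sub>L 'h)"
  shows "A \<longlonglongrightarrow> A0 \<Longrightarrow> B \<longlonglongrightarrow> B0 \<Longrightarrow> (\<lambda>n. A n o\<^sub>L B n) \<longlonglongrightarrow> (A0 o\<^sub>L B0)"
  by (rule bounded_bilinear.tendsto[OF bounded_bilinear_blinfun_compose])

text \<open>Fixed-point iteration for \<open>2Z = X + X Z\<^sup>* Z\<close>, i.e. \<open>X = f(Z)\<close>, carried along with the adjoints.\<close>

fun preimage_iterate :: "('h::real_normed_vector \<Rightarrow>\<^sub>L 'h) \<Rightarrow> ('h \<Rightarrow>\<^sub>L 'h) \<Rightarrow> nat \<Rightarrow> ('h \<Rightarrow>\<^sub>L 'h)"
  and preimage_iterate_adjoint :: "('h::real_normed_vector \<Rightarrow>\<^sub>L 'h) \<Rightarrow> ('h \<Rightarrow>\<^sub>L 'h) \<Rightarrow> nat \<Rightarrow> ('h \<Rightarrow>\<^sub>L 'h)"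
where
  "preimage_iterate X Xs 0 = 0"
| "preimage_iterate X Xs (Suc n) =
     (1/2) *\<^sub>R (X + (X o\<^sub>L (preimage_iterate_adjoint X Xs n o\<^sub>L preimage_iterate X Xs n)))"
| "preimage_iterate_adjoint X Xs 0 = 0"
| "preimage_iterate_adjoint X Xs (Suc n) =
     (1/2) *\<^sub>R (Xs + ((preimage_iterate_adjoint X Xs n o\<^sub>L preimage_iterate X Xs n) o\<^sub>L Xs))"

lemma is_adjoint_preimage_iterate:
  assumes "is_adjoint X Xs"
  shows "is_adjoint (preimage_iterate X Xs n) (preimage_iterate_adjoint X Xs n)"
proof (induction n)
  case (Suc n)
  then show ?case
    by (simp only: preimage_iterate.simps preimage_iterate_adjoint.simps)
      (intro is_adjoint_scaleR is_adjoint_add assms is_adjoint_compose[OF assms]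
        is_adjoint_compose[OF is_adjoint_sym[OF Suc] Suc])
qed (simp add: is_adjoint_zero)

lemma preimage_iterate_mem_weak_closure:
  assumes B: "real_star_algebra B" and X: "X \<in> weak_closure B" and adj: "is_adjoint X Xs"
  shows "preimage_iterate X Xs n \<in> weak_closure B"
proof (induction n)
  case 0
  have "0 \<in> B" using B unfolding real_star_algebra_def by blast
  then show ?case using weak_closure_subset by auto
next
  case (Suc n)
  have "preimage_iterate_adjoint X Xs n \<in> weak_closure B"
    by (rule weak_closure_adjoint[OF B Suc is_adjoint_preimage_iterate[OF adj]])
  then show ?case using Suc X
    by (simp only: preimage_iterate.simps) (intro weak_closure_scaleR[OF B] weak_closure_add[OF B] weak_closure_compose[OF B])
qed

lemma norm_preimage_iterate_le:
  assumes adj: "is_adjoint X Xs" and nX: "norm X \<le> 1"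
  shows "norm (preimage_iterate X Xs n) \<le> 1"
proof (induction n)
  case (Suc n)
  define Z where "Z = preimage_iterate X Xs n"
  define Zs where "Zs = preimage_iterate_adjoint X Xs n"
  have "norm Zs \<le> 1" using norm_le_if_is_adjoint[OF is_adjoint_preimage_iterate[OF adj]] Suc
    unfolding Zs_def by (meson order_trans)
  then have "norm (Zs o\<^sub>L Z) \<le> 1"
    using norm_blinfun_compose[of Zs Z] Suc unfolding Z_def by (smt (verit) mult_le_one norm_ge_zero)
  then have "norm (X o\<^sub>L (Zs o\<^sub>L Z)) \<le> 1"
    using norm_blinfun_compose[of X "Zs o\<^sub>L Z"] nX by (smt (verit) mult_le_one norm_ge_zero)
  then have "norm (X + (X o\<^sub>L (Zs o\<^sub>L Z))) \<le> 2"
    using nX norm_triangle_ineq[of X "X o\<^sub>L (Zs o\<^sub>L Z)"] by linarith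
  then show ?case unfolding Z_def Zs_def by simp
qed simp

lemma norm_preimage_iterate_step_le:
  assumes adj: "is_adjoint X Xs" and nX: "norm X \<le> q" and q: "q < 1"
  shows "norm (preimage_iterate X Xs (Suc n) - preimage_iterate X Xs n) \<le> q ^ n"
proof (induction n)
  case 0
  show ?case using nX q by simp
next
  case (Suc n)
  define z where "z k = preimage_iterate X Xs k" for k
  define zs where "zs k = preimage_iterate_adjoint X Xs k" for k
  have q0: "q \<ge> 0" using nX norm_ge_zero order_trans by blast
  have nz: "norm (z k) \<le> 1" and nzs: "norm (zs k) \<le> 1" for k
    using norm_preimage_iterate_le[OF adj] norm_le_if_is_adjoint[OF is_adjoint_preimage_iterate[OF adj]] nX q
    unfolding z_def zs_def by (meson less_imp_le order_trans)+
  define d where "d = z (Suc n) - z n"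
  define ds where "ds = zs (Suc n) - zs n"
  have nds: "norm ds \<le> norm d" unfolding d_def ds_def z_def zs_def
    by (rule norm_le_if_is_adjoint[OF is_adjoint_diff[OF is_adjoint_preimage_iterate[OF adj] is_adjoint_preimage_iterate[OF adj]]])
  text \<open>\<open>z\<^sup>*\<^sub>n\<^sub>+\<^sub>1 z\<^sub>n\<^sub>+\<^sub>1 - z\<^sup>*\<^sub>n z\<^sub>n = z\<^sup>*\<^sub>n\<^sub>+\<^sub>1 d + d\<^sup>* z\<^sub>n\<close>, so the iteration contracts by the factor \<open>\<parallel>X\<parallel>\<close>.\<close>
  have "z (Suc (Suc n)) - z (Suc n) = (1/2) *\<^sub>R (X o\<^sub>L ((zs (Suc n) o\<^sub>L d) + (ds o\<^sub>L z n)))"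
    unfolding z_def zs_def d_def ds_def by (intro blinfun_eqI) (simp add: blinfun_apply_simps algebra_simps)
  also have "norm \<dots> \<le> (1/2) * (norm X * (norm (zs (Suc n)) * norm d + norm ds * norm (z n)))"
  proof -
    have "norm ((zs (Suc n) o\<^sub>L d) + (ds o\<^sub>L z n)) \<le> norm (zs (Suc n)) * norm d + norm ds * norm (z n)"
      by (rule order_trans[OF norm_triangle_ineq add_mono[OF norm_blinfun_compose norm_blinfun_compose]])
    then show ?thesis
      using norm_blinfun_compose[of X "(zs (Suc n) o\<^sub>L d) + (ds o\<^sub>L z n)"] by (simp add: order_trans mult_left_mono)
  qed
  also have "\<dots> \<le> (1/2) * (q * (1 * norm d + norm d * 1))"
    using nX nzs[of "Suc n"] nz[of n] nds q0
    by (intro mult_left_mono mult_mono add_mono) auto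
  also have "\<dots> \<le> q * q ^ n" using Suc q0 unfolding d_def z_def by (simp add: mult_left_mono)
  finally show ?case unfolding z_def by simp
qed

lemma weak_closure_preimage_exists:
  fixes X Xs :: "'h::{real_inner,complete_space} \<Rightarrow>\<^sub>L 'h"
  assumes B: "real_star_algebra B" and X: "X \<in> weak_closure B" and adj: "is_adjoint X Xs"
    and nX: "norm X \<le> q" and q: "q < 1"
  shows "\<exists>Z Zs. Z \<in> weak_closure B \<and> is_adjoint Z Zs \<and> 2 *\<^sub>R Z = X + (X o\<^sub>L (Zs o\<^sub>L Z))"
proof -
  define z where "z = preimage_iterate X Xs"
  define zs where "zs = preimage_iterate_adjoint X Xs"
  have q0: "q \<ge> 0" using nX norm_ge_zero order_trans by blast
  have adj_n: "is_adjoint (z n) (zs n)" for n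
    unfolding z_def zs_def by (rule is_adjoint_preimage_iterate[OF adj])
  have dz: "norm (z (Suc n) - z n) \<le> q ^ n" for n
    unfolding z_def by (rule norm_preimage_iterate_step_le[OF adj nX q])
  have dzs: "norm (zs (Suc n) - zs n) \<le> q ^ n" for n
    using norm_le_if_is_adjoint[OF is_adjoint_diff[OF adj_n adj_n], of "Suc n" n] dz[of n] by simp
  obtain Z where Zl: "z \<longlonglongrightarrow> Z" using convergent_if_geometric_increments[OF dz q0 q] by blast
  obtain Zs where Zsl: "zs \<longlonglongrightarrow> Zs" using convergent_if_geometric_increments[OF dzs q0 q] by blast
  have "Z \<in> weak_closure B"
    using closed_sequentially[OF closed_weak_closure _ Zl] preimage_iterate_mem_weak_closure[OF B X adj]
    unfolding z_def by blast
  moreover have "is_adjoint Z Zs" by (rule is_adjoint_tendsto[OF adj_n Zl Zsl])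
  moreover have "Z = (1/2) *\<^sub>R (X + (X o\<^sub>L (Zs o\<^sub>L Z)))"
  proof -
    have "(\<lambda>n. z (Suc n)) \<longlonglongrightarrow> Z" using Zl by (rule LIMSEQ_Suc)
    moreover have "(\<lambda>n. z (Suc n)) = (\<lambda>n. (1/2) *\<^sub>R (X + (X o\<^sub>L (zs n o\<^sub>L z n))))"
      unfolding z_def zs_def by simp
    moreover have "(\<lambda>n. (1/2) *\<^sub>R (X + (X o\<^sub>L (zs n o\<^sub>L z n)))) \<longlonglongrightarrow> (1/2) *\<^sub>R (X + (X o\<^sub>L (Zs o\<^sub>L Z)))"
      by (intro tendsto_scaleR tendsto_const tendsto_add tendsto_blinfun_compose Zl Zsl)
    ultimately show ?thesis using LIMSEQ_unique by metis
  qed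
  then have "2 *\<^sub>R Z = 2 *\<^sub>R ((1/2) *\<^sub>R (X + (X o\<^sub>L (Zs o\<^sub>L Z))))" by (rule arg_cong)
  then have "2 *\<^sub>R Z = X + (X o\<^sub>L (Zs o\<^sub>L Z))" by (simp only: scaleR_scaleR) simp
  ultimately show ?thesis by blast
qed

lemma kaplansky_density_strict:
  fixes X :: "'h::{real_inner,complete_space} \<Rightarrow>\<^sub>L 'h"
  assumes B: "real_star_algebra B" and X: "X \<in> weak_closure B" and nX: "norm X \<le> q" and q: "q < 1"
    and V: "finite V" and e: "e > 0"
  shows "\<exists>Y\<in>B. norm Y \<le> 1 \<and> (\<forall>x\<in>V. norm (blinfun_apply (X - Y) x) < e)"
proof -
  obtain Xs where adjX: "is_adjoint X Xs" using is_adjoint_exists by blast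
  obtain Z Zs where Zw: "Z \<in> weak_closure B" and adjZ: "is_adjoint Z Zs"
    and Zeq: "2 *\<^sub>R Z = X + (X o\<^sub>L (Zs o\<^sub>L Z))"
    using weak_closure_preimage_exists[OF B X adjX nX q] by blast
  define PZ where "PZ = inverse_id_plus (Zs o\<^sub>L Z)"
  have PZ: "\<And>x. blinfun_apply PZ x + blinfun_apply Zs (blinfun_apply Z (blinfun_apply PZ x)) = x"
    unfolding PZ_def by (rule inverse_id_plus_adjoint_product_apply[OF adjZ])
  have Xx: "blinfun_apply X x = 2 *\<^sub>R blinfun_apply Z (blinfun_apply PZ x)" for x
  proof -
    have "2 *\<^sub>R blinfun_apply Z (blinfun_apply PZ x) = blinfun_apply (2 *\<^sub>R Z) (blinfun_apply PZ x)"
      by (simp add: blinfun_apply_simps)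
    also have "\<dots> = blinfun_apply X (blinfun_apply PZ x + blinfun_apply Zs (blinfun_apply Z (blinfun_apply PZ x)))"
      unfolding Zeq by (simp add: blinfun_apply_simps)
    finally show ?thesis using PZ by simp
  qed
  obtain S Ss where SB: "S \<in> B" and SsB: "Ss \<in> B" and adjS: "is_adjoint S Ss"
    and aS: "\<forall>x\<in>blinfun_apply PZ ` V. norm (blinfun_apply (Z - S) x) < e / 5"
    and aSs: "\<forall>y\<in>(\<lambda>x. blinfun_apply Z (blinfun_apply PZ x)) ` V. norm (blinfun_apply (Zs - Ss) y) < e / 5"
    using weak_closure_strong_star_approx[OF B Zw adjZ, of "blinfun_apply PZ ` V"
      "(\<lambda>x. blinfun_apply Z (blinfun_apply PZ x)) ` V" "e / 5"] V e by auto
  define PS where "PS = inverse_id_plus (Ss o\<^sub>L S)"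
  have PS1: "\<And>x. blinfun_apply PS x + blinfun_apply Ss (blinfun_apply S (blinfun_apply PS x)) = x"
    and PS2: "\<And>x. blinfun_apply PS (x + blinfun_apply Ss (blinfun_apply S x)) = x"
    unfolding PS_def by (rule inverse_id_plus_adjoint_product_apply[OF adjS])+
  define Y where "Y = 2 *\<^sub>R (S o\<^sub>L PS)"
  have "Y \<in> B"
    using B SB SsB adjoint_product_positive[OF adjS] compose_inverse_id_plus_mem[of B S "Ss o\<^sub>L S"]
    unfolding Y_def PS_def real_star_algebra_def by blast
  moreover have "norm Y \<le> 1"
  proof (rule norm_blinfun_bound[of 1, simplified])
    show "norm (blinfun_apply Y x) \<le> norm x" for x
      using norm_transform_apply_le[OF adjS PS1, of x] unfolding Y_def by (simp add: blinfun_apply_simps)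
  qed
  moreover have "norm (blinfun_apply (X - Y) x) < e" if x: "x \<in> V" for x
  proof -
    have "norm (blinfun_apply (X - Y) x)
        = norm (2 *\<^sub>R blinfun_apply S (blinfun_apply PS x) - 2 *\<^sub>R blinfun_apply Z (blinfun_apply PZ x))"
      unfolding Y_def by (simp add: blinfun_apply_simps Xx norm_minus_commute)
    also have "\<dots> \<le> 4 * norm (blinfun_apply (S - Z) (blinfun_apply PZ x))
        + norm (blinfun_apply (Zs - Ss) (blinfun_apply Z (blinfun_apply PZ x)))"
      by (rule transform_difference_bound[OF adjS PS1 PS2 PZ])
    also have "\<dots> < 4 * (e / 5) + e / 5"
    proof (rule add_less_le_mono)
      have "norm (blinfun_apply (S - Z) (blinfun_apply PZ x)) = norm (blinfun_apply (Z - S) (blinfun_apply PZ x))"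
        by (simp add: blinfun.diff_left norm_minus_commute)
      then show "4 * norm (blinfun_apply (S - Z) (blinfun_apply PZ x)) < 4 * (e / 5)" using aS x by (simp add: mult.commute)
      show "norm (blinfun_apply (Zs - Ss) (blinfun_apply Z (blinfun_apply PZ x))) \<le> e / 5"
        using aSs x by (simp add: less_imp_le)
    qed
    finally show ?thesis by simp
  qed
  ultimately show ?thesis by blast
qed

lemma kaplansky_density:
  fixes X :: "'h::{real_inner,complete_space} \<Rightarrow>\<^sub>L 'h"
  assumes B: "real_star_algebra B" and X: "X \<in> weak_closure B" and nX: "norm X \<le> 1"
    and V: "finite V" and e: "e > 0"
  shows "\<exists>Y\<in>B. norm Y \<le> 1 \<and> (\<forall>x\<in>V. norm (blinfun_apply (X - Y) x) < e)"
proof -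
  define K where "K = (\<Sum>x\<in>V. norm x) + 1"
  have K: "K > 0" unfolding K_def by (simp add: add_nonneg_pos sum_nonneg)
  have Kx: "norm x \<le> K" if "x \<in> V" for x
    using member_le_sum[OF that, of norm] V unfolding K_def by simp
  define \<delta> where "\<delta> = min (1/2) (e / (4 * K))"
  have d0: "\<delta> > 0" and d1: "\<delta> \<le> 1/2" and d2: "\<delta> \<le> e / (4 * K)"
    unfolding \<delta>_def using e K by auto
  have "(1 - \<delta>) *\<^sub>R X \<in> weak_closure B" by (rule weak_closure_scaleR[OF B X])
  moreover have "norm ((1 - \<delta>) *\<^sub>R X) \<le> 1 - \<delta>" using nX d1 by (simp add: mult_left_le)
  ultimately obtain Y where Y: "Y \<in> B" "norm Y \<le> 1"
    and XY: "\<forall>x\<in>V. norm (blinfun_apply ((1 - \<delta>) *\<^sub>R X - Y) x) < e / 2"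
    using kaplansky_density_strict[OF B _ _ _ V, of "(1 - \<delta>) *\<^sub>R X" "1 - \<delta>" "e / 2"] d0 e by auto
  have "norm (blinfun_apply (X - Y) x) < e" if x: "x \<in> V" for x
  proof -
    have "blinfun_apply (X - Y) x = \<delta> *\<^sub>R blinfun_apply X x + blinfun_apply ((1 - \<delta>) *\<^sub>R X - Y) x"
      by (simp add: blinfun_apply_simps algebra_simps)
    then have "norm (blinfun_apply (X - Y) x)
        \<le> norm (\<delta> *\<^sub>R blinfun_apply X x) + norm (blinfun_apply ((1 - \<delta>) *\<^sub>R X - Y) x)"
      by (metis norm_triangle_ineq)
    then have "norm (blinfun_apply (X - Y) x) \<le> \<delta> * norm (blinfun_apply X x) + e / 2"
      using XY x d0 by fastforce
    moreover have "\<delta> * norm (blinfun_apply X x) \<le> (e / (4 * K)) * K"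
      using norm_blinfun[of X x] mult_right_mono[OF nX, of "norm x"] Kx[OF x] d0 d2
      by (intro mult_mono) auto
    moreover have "(e / (4 * K)) * K + e / 2 < e" using K e by simp
    ultimately show ?thesis by linarith
  qed
  then show ?thesis using Y by blast
qed

section \<open>Distance to a finite-dimensional subspace\<close>

lemma closed_span_if_coefficient_bound:
  fixes G :: "'a::real_normed_vector set"
  assumes G: "finite G" and C: "C \<ge> 0" and lb: "\<And>u. (\<Sum>g\<in>G. \<bar>u g\<bar>) \<le> C * norm (\<Sum>g\<in>G. u g *\<^sub>R g)"
  shows "closed (span G)"
proof (rule closed_sequential_limits[THEN iffD2], intro allI impI, elim conjE)
  fix w and l assume ws: "\<forall>n. w n \<in> span G" and wl: "w \<longlonglongrightarrow> l"
  have "\<forall>n. \<exists>u. w n = (\<Sum>g\<in>G. u g *\<^sub>R g)" using ws span_finite[OF G] by auto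
  then obtain u where u: "\<And>n. w n = (\<Sum>g\<in>G. u n g *\<^sub>R g)" by metis
  have cu: "convergent (\<lambda>n. u n g)" if g: "g \<in> G" for g
  proof -
    have "Cauchy (\<lambda>n. u n g)"
    proof (rule metric_CauchyI)
      fix e :: real assume e: "e > 0"
      have "Cauchy w" using wl by (rule LIMSEQ_imp_Cauchy)
      moreover have "e / (C + 1) > 0" using e C by simp
      ultimately obtain M where M: "\<forall>m\<ge>M. \<forall>n\<ge>M. dist (w m) (w n) < e / (C + 1)"
        using metric_CauchyD by blast
      have "dist (u m g) (u n g) < e" if "m \<ge> M" "n \<ge> M" for m n
      proof -
        have "\<bar>u m g - u n g\<bar> \<le> (\<Sum>g\<in>G. \<bar>u m g - u n g\<bar>)"
          using member_le_sum[OF g, of "\<lambda>g. \<bar>u m g - u n g\<bar>"] G by simp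
        also have "\<dots> \<le> C * norm (\<Sum>g\<in>G. (u m g - u n g) *\<^sub>R g)" by (rule lb)
        also have "(\<Sum>g\<in>G. (u m g - u n g) *\<^sub>R g) = w m - w n"
          unfolding u by (simp add: scaleR_diff_left sum_subtractf)
        also have "C * norm (w m - w n) \<le> C * (e / (C + 1))"
          using M that C by (intro mult_left_mono) (auto simp: dist_norm less_imp_le)
        also have "\<dots> < e" using e C by (simp add: field_simps)
        finally show ?thesis by (simp add: dist_real_def)
      qed
      then show "\<exists>M. \<forall>m\<ge>M. \<forall>n\<ge>M. dist (u m g) (u n g) < e" by blast
    qed
    then show ?thesis by (simp add: Cauchy_convergent_iff)
  qed
  define v where "v g = lim (\<lambda>n. u n g)" for g
  have vl: "(\<lambda>n. u n g) \<longlonglongrightarrow> v g" if "g \<in> G" for g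
    unfolding v_def using cu[OF that] by (simp add: convergent_LIMSEQ_iff)
  have "w \<longlonglongrightarrow> (\<Sum>g\<in>G. v g *\<^sub>R g)"
    unfolding u by (intro tendsto_sum tendsto_scaleR vl tendsto_const)
  then have "l = (\<Sum>g\<in>G. v g *\<^sub>R g)" using wl LIMSEQ_unique by blast
  then show "l \<in> span G" by (simp add: span_sum span_scale span_base)
qed

lemma independent_coefficient_bound:
  fixes G :: "'a::real_normed_vector set"
  assumes G: "finite G" and ind: "independent G"
  shows "\<exists>C\<ge>0. \<forall>u. (\<Sum>g\<in>G. \<bar>u g\<bar>) \<le> C * norm (\<Sum>g\<in>G. u g *\<^sub>R g)"
  using G ind
proof (induction G rule: finite_induct)
  case empty then show ?case by auto
next
  case (insert h G)
  have indG: "independent G" and hG: "h \<notin> span G"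
    using insert.prems insert.hyps(2) by (auto simp: independent_insert)
  obtain C where C: "C \<ge> 0" "\<And>u. (\<Sum>g\<in>G. \<bar>u g\<bar>) \<le> C * norm (\<Sum>g\<in>G. u g *\<^sub>R g)"
    using insert.IH[OF indG] by blast
  have cl: "closed (span G)" by (rule closed_span_if_coefficient_bound[OF insert.hyps(1) C])
  have ne: "span G \<noteq> {}" using span_zero by blast
  define D where "D = infdist h (span G)"
  have D: "D > 0" using hG in_closed_iff_infdist_zero[OF cl ne, of h] infdist_nonneg[of h "span G"]
    unfolding D_def by linarith
  define C' where "C' = (1 + C * norm h) / D + C"
  have C'0: "C' \<ge> 0" unfolding C'_def using C D by simp
  have "(\<Sum>g\<in>insert h G. \<bar>u g\<bar>) \<le> C' * norm (\<Sum>g\<in>insert h G. u g *\<^sub>R g)" for u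
  proof -
    define w where "w = (\<Sum>g\<in>G. u g *\<^sub>R g)"
    define v where "v = (\<Sum>g\<in>insert h G. u g *\<^sub>R g)"
    have vw: "v = u h *\<^sub>R h + w" unfolding v_def w_def using insert.hyps by simp
    have wspan: "w \<in> span G" unfolding w_def by (simp add: span_sum span_scale span_base)
    have nv: "\<bar>u h\<bar> * D \<le> norm v"
    proof (cases "u h = 0")
      case True then show ?thesis by simp
    next
      case False
      have m: "- ((1 / u h) *\<^sub>R w) \<in> span G" using wspan by (simp add: span_neg span_scale)
      have "D \<le> dist h (- ((1 / u h) *\<^sub>R w))" unfolding D_def by (rule infdist_le[OF m])
      also have "\<dots> = norm (h + (1 / u h) *\<^sub>R w)" by (simp add: dist_norm)
      finally have "\<bar>u h\<bar> * D \<le> \<bar>u h\<bar> * norm (h + (1 / u h) *\<^sub>R w)" by (simp add: mult_left_mono)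
      also have "\<dots> = norm (u h *\<^sub>R (h + (1 / u h) *\<^sub>R w))" by simp
      also have "u h *\<^sub>R (h + (1 / u h) *\<^sub>R w) = v" unfolding vw using False by (simp add: scaleR_add_right)
      finally show ?thesis .
    qed
    have uh: "\<bar>u h\<bar> \<le> norm v / D" using nv D by (simp add: pos_le_divide_eq)
    have nw: "norm w \<le> norm v + \<bar>u h\<bar> * norm h"
    proof -
      have "w = v - u h *\<^sub>R h" unfolding vw by simp
      then have "norm w \<le> norm v + norm (u h *\<^sub>R h)" by (metis norm_triangle_ineq4)
      then show ?thesis by simp
    qed
    have "(\<Sum>g\<in>insert h G. \<bar>u g\<bar>) = \<bar>u h\<bar> + (\<Sum>g\<in>G. \<bar>u g\<bar>)" using insert.hyps by simp
    also have "\<dots> \<le> \<bar>u h\<bar> + C * norm w" using C(2)[of u] unfolding w_def by simp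
    also have "\<dots> \<le> \<bar>u h\<bar> + C * (norm v + \<bar>u h\<bar> * norm h)" using nw C(1) by (simp add: mult_left_mono)
    also have "\<dots> = \<bar>u h\<bar> * (1 + C * norm h) + C * norm v" by (simp add: algebra_simps)
    also have "\<dots> \<le> (norm v / D) * (1 + C * norm h) + C * norm v"
      using uh C(1) by (intro add_mono mult_right_mono) auto
    also have "\<dots> = C' * norm v" unfolding C'_def by (simp add: algebra_simps add_divide_distrib)
    finally show ?thesis unfolding v_def .
  qed
  then show ?case using C'0 by blast
qed

lemma abs_diff_round_le:
  fixes a \<delta> :: real
  assumes "\<delta> > 0"
  shows "\<bar>a - \<delta> * of_int (round (a / \<delta>))\<bar> \<le> \<delta> / 2"
proof -
  have "a - \<delta> * of_int (round (a / \<delta>)) = \<delta> * (a / \<delta> - of_int (round (a / \<delta>)))"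
    using assms by (simp add: algebra_simps)
  moreover have "\<bar>a / \<delta> - of_int (round (a / \<delta>))\<bar> \<le> 1/2"
    using of_int_round_le[of "a / \<delta>"] of_int_round_ge[of "a / \<delta>"] by linarith
  ultimately show ?thesis using assms by (simp add: abs_mult)
qed

lemma finite_net_bounded_coefficients:
  fixes G :: "'a::real_normed_vector set"
  assumes G: "finite G" and r: "r > 0"
  shows "\<exists>N. finite N \<and>
    (\<forall>u. (\<forall>g\<in>G. \<bar>u g\<bar> \<le> M) \<longrightarrow> (\<exists>n\<in>N. norm ((\<Sum>g\<in>G. u g *\<^sub>R g) - n) \<le> r))"
proof -
  define \<sigma> where "\<sigma> = (\<Sum>g\<in>G. norm g)"
  have \<sigma>0: "\<sigma> \<ge> 0" unfolding \<sigma>_def by (simp add: sum_nonneg)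
  define \<delta> where "\<delta> = r / (\<sigma> + 1)"
  have \<delta>0: "\<delta> > 0" unfolding \<delta>_def using r \<sigma>0 by simp
  define K :: int where "K = \<lceil>M / \<delta>\<rceil> + 1"
  define N where "N = (\<lambda>k. \<Sum>g\<in>G. (\<delta> * of_int (k g)) *\<^sub>R g) ` (PiE G (\<lambda>_. {-K..K}))"
  have "\<exists>n\<in>N. norm ((\<Sum>g\<in>G. u g *\<^sub>R g) - n) \<le> r" if u: "\<forall>g\<in>G. \<bar>u g\<bar> \<le> M" for u
  proof -
    define k where "k = restrict (\<lambda>g. round (u g / \<delta>)) G"
    have "round (u g / \<delta>) \<in> {-K..K}" if g: "g \<in> G" for g
    proof -
      have "\<bar>u g / \<delta>\<bar> \<le> M / \<delta>" using u g \<delta>0 by (simp add: divide_right_mono)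
      then have "\<bar>u g / \<delta>\<bar> \<le> of_int \<lceil>M / \<delta>\<rceil>" using le_of_int_ceiling order_trans by blast
      then have "real_of_int (- K) \<le> of_int (round (u g / \<delta>))"
        and "real_of_int (round (u g / \<delta>)) \<le> of_int K"
        using of_int_round_le[of "u g / \<delta>"] of_int_round_ge[of "u g / \<delta>"] unfolding K_def abs_le_iff
        by linarith+
      then show ?thesis by simp
    qed
    then have "k \<in> PiE G (\<lambda>_. {-K..K})" unfolding k_def by (simp add: restrict_PiE_iff)
    then have "(\<Sum>g\<in>G. (\<delta> * of_int (k g)) *\<^sub>R g) \<in> N" unfolding N_def by (rule imageI)
    moreover have "norm ((\<Sum>g\<in>G. u g *\<^sub>R g) - (\<Sum>g\<in>G. (\<delta> * of_int (k g)) *\<^sub>R g)) \<le> r"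
    proof -
      have "norm ((\<Sum>g\<in>G. u g *\<^sub>R g) - (\<Sum>g\<in>G. (\<delta> * of_int (k g)) *\<^sub>R g))
          = norm (\<Sum>g\<in>G. (u g - \<delta> * of_int (round (u g / \<delta>))) *\<^sub>R g)"
        unfolding k_def by (simp add: scaleR_diff_left sum_subtractf)
      also have "\<dots> \<le> (\<Sum>g\<in>G. norm ((u g - \<delta> * of_int (round (u g / \<delta>))) *\<^sub>R g))"
        by (rule norm_sum)
      also have "\<dots> \<le> (\<Sum>g\<in>G. (\<delta> / 2) * norm g)"
        using abs_diff_round_le[OF \<delta>0] by (intro sum_mono) (simp only: norm_scaleR mult_right_mono norm_ge_zero)
      also have "\<dots> = (\<delta> / 2) * \<sigma>" unfolding \<sigma>_def by (simp add: sum_distrib_left)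
      also have "\<dots> \<le> r" unfolding \<delta>_def using \<sigma>0 r by (simp add: field_simps)
      finally show ?thesis .
    qed
    ultimately show ?thesis by blast
  qed
  moreover have "finite N" unfolding N_def using G by (intro finite_imageI finite_PiE) auto
  ultimately show ?thesis by blast
qed

lemma finite_net_bounded_span:
  fixes G :: "'a::real_normed_vector set"
  assumes G: "finite G" and r: "r > 0"
  shows "\<exists>N. finite N \<and> (\<forall>v\<in>span G. norm v \<le> R \<longrightarrow> (\<exists>n\<in>N. norm (v - n) \<le> r))"
proof -
  obtain G' where G'G: "G' \<subseteq> G" and ind: "independent G'" and Gs: "G \<subseteq> span G'"
    by (rule maximal_independent_subset)
  have G': "finite G'" using G G'G finite_subset by blast
  obtain C where C: "C \<ge> 0" "\<And>u. (\<Sum>g\<in>G'. \<bar>u g\<bar>) \<le> C * norm (\<Sum>g\<in>G'. u g *\<^sub>R g)"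
    using independent_coefficient_bound[OF G' ind] by blast
  obtain N where N: "finite N" "\<And>u. \<forall>g\<in>G'. \<bar>u g\<bar> \<le> C * max R 0 \<Longrightarrow>
      \<exists>n\<in>N. norm ((\<Sum>g\<in>G'. u g *\<^sub>R g) - n) \<le> r"
    using finite_net_bounded_coefficients[OF G' r, of "C * max R 0"] by blast
  have "\<exists>n\<in>N. norm (v - n) \<le> r" if v: "v \<in> span G" "norm v \<le> R" for v
  proof -
    have "v \<in> span G'" using v Gs span_mono span_span by blast
    then obtain u where u: "v = (\<Sum>g\<in>G'. u g *\<^sub>R g)" using span_finite[OF G'] by auto
    have "\<bar>u g\<bar> \<le> C * max R 0" if "g \<in> G'" for g
    proof -
      have "\<bar>u g\<bar> \<le> (\<Sum>g\<in>G'. \<bar>u g\<bar>)" using member_le_sum[OF that, of "\<lambda>g. \<bar>u g\<bar>"] G' by simp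
      also have "\<dots> \<le> C * norm v" using C(2)[of u] u by simp
      also have "\<dots> \<le> C * max R 0" using v(2) C(1) by (simp add: mult_left_mono)
      finally show ?thesis .
    qed
    then show ?thesis using N(2) u by blast
  qed
  then show ?thesis using N(1) by blast
qed

lemma exists_unit_vector_norm_gt:
  fixes Z :: "'h::real_normed_vector \<Rightarrow>\<^sub>L 'h"
  assumes "c < norm Z" "0 \<le> c"
  shows "\<exists>x. norm x \<le> 1 \<and> c < norm (blinfun_apply Z x)"
proof (rule ccontr)
  assume "\<not> ?thesis"
  then have h: "norm (blinfun_apply Z x) \<le> c" if "norm x \<le> 1" for x using that by (meson not_le)
  have "norm Z \<le> c"
  proof (rule norm_blinfun_bound[OF assms(2)])
    fix x
    show "norm (blinfun_apply Z x) \<le> c * norm x"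
    proof (cases "x = 0")
      case True then show ?thesis by simp
    next
      case False
      then have nx: "norm x > 0" by simp
      have "norm (blinfun_apply Z ((1 / norm x) *\<^sub>R x)) \<le> c" by (rule h) (use nx in simp)
      then have "(1 / norm x) * norm (blinfun_apply Z x) \<le> c" by (simp add: blinfun.scaleR_right)
      then show ?thesis using nx by (simp add: field_simps)
    qed
  qed
  then show False using assms(1) by simp
qed

lemma infdist_less_imp_exists:
  assumes "V \<noteq> {}" "infdist x V < t"
  shows "\<exists>v\<in>V. dist x v < t"
proof -
  have "(INF a\<in>V. dist x a) < t" using assms by (simp add: infdist_notempty)
  moreover have "bdd_below ((\<lambda>a. dist x a) ` V)" by (rule bdd_belowI[of _ 0]) auto
  ultimately show ?thesis using cINF_less_iff[OF assms(1)] by blast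
qed

lemma infdist_le_if_strong_approximants:
  fixes T :: "'h::real_normed_vector \<Rightarrow>\<^sub>L 'h"
  assumes G: "finite G" and VG: "V \<subseteq> span G" and V0: "0 \<in> V"
    and approx: "\<And>F e. finite F \<Longrightarrow> e > 0 \<Longrightarrow>
      \<exists>T'. norm T' \<le> R \<and> infdist T' V \<le> s \<and> (\<forall>x\<in>F. norm (T x - blinfun_apply T' x) < e)"
  shows "infdist T V \<le> s"
proof (rule ccontr)
  assume "\<not> infdist T V \<le> s"
  define \<epsilon> where "\<epsilon> = (infdist T V - s) / 5"
  have \<epsilon>: "\<epsilon> > 0" unfolding \<epsilon>_def using \<open>\<not> infdist T V \<le> s\<close> by simp
  have dist_T: "infdist T V = s + 5 * \<epsilon>" unfolding \<epsilon>_def by (simp add: field_simps)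
  obtain T0 where "infdist T0 V \<le> s" using approx[of "{}" 1] by auto
  then have s0: "s \<ge> 0" using infdist_nonneg order_trans by blast
  obtain N where fN: "finite N"
    and N: "\<And>v. v \<in> span G \<Longrightarrow> norm v \<le> R + s + \<epsilon> \<Longrightarrow> \<exists>n\<in>N. norm (v - n) \<le> \<epsilon>"
    using finite_net_bounded_span[OF G \<epsilon>, of "R + s + \<epsilon>"] by blast
  define N' where "N' = {n \<in> N. \<exists>v\<in>V. norm (v - n) \<le> \<epsilon>}"
  have "\<exists>x. norm x \<le> 1 \<and> s + 3 * \<epsilon> < norm (blinfun_apply (T - n) x)" if "n \<in> N'" for n
  proof -
    obtain v where v: "v \<in> V" "norm (v - n) \<le> \<epsilon>" using \<open>n \<in> N'\<close> unfolding N'_def by blast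
    have "infdist T V \<le> norm ((T - n) - (v - n))" using infdist_le[OF v(1)] by (simp add: dist_norm)
    also have "\<dots> \<le> norm (T - n) + norm (v - n)" by (rule norm_triangle_ineq4)
    finally have "s + 3 * \<epsilon> < norm (T - n)" using v(2) \<epsilon> dist_T by linarith
    then show ?thesis using exists_unit_vector_norm_gt s0 \<epsilon> by force
  qed
  then obtain xf where "\<forall>n\<in>N'. norm (xf n) \<le> 1 \<and> s + 3 * \<epsilon> < norm (blinfun_apply (T - n) (xf n))"
    by (metis bchoice)
  then have xf: "\<And>n. n \<in> N' \<Longrightarrow> norm (xf n) \<le> 1 \<and> s + 3 * \<epsilon> < norm (blinfun_apply (T - n) (xf n))"
    by blast
  have "finite N'" unfolding N'_def using fN by simp
  then obtain T' where nT': "norm T' \<le> R" and dT': "infdist T' V \<le> s"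
    and T': "\<forall>x\<in>xf ` N'. norm (T x - blinfun_apply T' x) < \<epsilon>"
    using approx[of "xf ` N'" \<epsilon>] \<epsilon> by blast
  obtain v where v: "v \<in> V" "dist T' v < s + \<epsilon>"
    using infdist_less_imp_exists[of V T' "s + \<epsilon>"] V0 dT' \<epsilon> by auto
  have "norm v \<le> norm T' + norm (T' - v)"
    using norm_triangle_ineq4[of T' "T' - v"] by simp
  then have "norm v \<le> R + s + \<epsilon>"
    using nT' v(2) by (simp add: dist_norm)
  then obtain n where "n \<in> N" and vn: "norm (v - n) \<le> \<epsilon>" using N VG v(1) by blast
  then have n: "n \<in> N'" unfolding N'_def using v(1) by blast
  define x where "x = xf n"
  have nx: "norm x \<le> 1" using xf[OF n] unfolding x_def by simp
  have unit: "norm (blinfun_apply U x) \<le> norm U" for U :: "'h \<Rightarrow>\<^sub>L 'h"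
    using norm_blinfun[of U x] mult_left_le[OF nx norm_ge_zero[of U]] by linarith
  have "blinfun_apply (T - n) x
      = blinfun_apply (T - T') x + (blinfun_apply (T' - v) x + blinfun_apply (v - n) x)"
    by (simp add: blinfun.diff_left)
  then have "norm (blinfun_apply (T - n) x)
      \<le> norm (blinfun_apply (T - T') x) + (norm (blinfun_apply (T' - v) x) + norm (blinfun_apply (v - n) x))"
    using norm_triangle_ineq norm_triangle_le by (metis add_left_mono)
  moreover have "norm (blinfun_apply (T - T') x) < \<epsilon>"
    using T' n unfolding x_def by (simp add: blinfun.diff_left)
  moreover have "norm (blinfun_apply (T' - v) x) < s + \<epsilon>"
    using unit[of "T' - v"] v(2) by (simp add: dist_norm)
  moreover have "norm (blinfun_apply (v - n) x) \<le> \<epsilon>"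
    using unit[of "v - n"] vn by simp
  ultimately show False using xf[OF n] unfolding x_def by linarith
qed

lemma norm_sandwich_le:
  fixes A X C :: "'h::real_normed_vector \<Rightarrow>\<^sub>L 'h"
  assumes "norm X \<le> 1"
  shows "norm (A o\<^sub>L X o\<^sub>L C) \<le> norm A * norm C"
proof -
  have "norm (A o\<^sub>L X o\<^sub>L C) \<le> norm (A o\<^sub>L X) * norm C" by (rule norm_blinfun_compose)
  also have "\<dots> \<le> (norm A * norm X) * norm C" by (intro mult_right_mono norm_blinfun_compose) simp
  also have "\<dots> \<le> norm A * norm C" using assms by (intro mult_right_mono mult_left_le) auto
  finally show ?thesis .
qed

lemma infdist_weak_closure_le:
  fixes A C X :: "'h::{real_inner,complete_space} \<Rightarrow>\<^sub>L 'h"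
  assumes B: "real_star_algebra B" and G: "finite G" and VG: "V \<subseteq> span G" and V0: "0 \<in> V"
    and le: "\<And>Y. Y \<in> B \<Longrightarrow> norm Y \<le> 1 \<Longrightarrow> infdist (A o\<^sub>L Y o\<^sub>L C) V \<le> s"
    and X: "X \<in> weak_closure B" and nX: "norm X \<le> 1"
  shows "infdist (A o\<^sub>L X o\<^sub>L C) V \<le> s"
proof (rule infdist_le_if_strong_approximants[OF G VG V0])
  fix F :: "'h set" and e :: real assume F: "finite F" and e: "e > 0"
  have nA: "norm A + 1 > 0" by (simp add: add_nonneg_pos)
  obtain Y where Y: "Y \<in> B" "norm Y \<le> 1"
    and XY: "\<forall>z\<in>C ` F. norm (blinfun_apply (X - Y) z) < e / (norm A + 1)"
    using kaplansky_density[OF B X nX, of "C ` F" "e / (norm A + 1)"] F e nA by auto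
  have "norm ((A o\<^sub>L X o\<^sub>L C) x - (A o\<^sub>L Y o\<^sub>L C) x) < e" if "x \<in> F" for x
  proof -
    have "(A o\<^sub>L X o\<^sub>L C) x - (A o\<^sub>L Y o\<^sub>L C) x = A (blinfun_apply (X - Y) (C x))"
      by (simp add: blinfun.diff_left blinfun.diff_right)
    then have "norm ((A o\<^sub>L X o\<^sub>L C) x - (A o\<^sub>L Y o\<^sub>L C) x) \<le> norm A * norm (blinfun_apply (X - Y) (C x))"
      by (simp add: norm_blinfun)
    also have "\<dots> \<le> norm A * (e / (norm A + 1))"
      using XY that by (intro mult_left_mono) (auto simp: less_imp_le)
    also have "\<dots> < e" using e nA by (simp add: field_simps)
    finally show ?thesis .
  qed
  then show "\<exists>T'. norm T' \<le> norm A * norm C \<and> infdist T' V \<le> s \<and>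
      (\<forall>x\<in>F. norm ((A o\<^sub>L X o\<^sub>L C) x - blinfun_apply T' x) < e)"
    using Y le norm_sandwich_le by blast
qed

section \<open>Kolmogorov numbers\<close>

lemma cspan_subset_span:
  fixes J :: "'h::{real_inner,complete_space} \<Rightarrow>\<^sub>L 'h"
  shows "cspan J S \<subseteq> span (S \<union> (\<lambda>s. J o\<^sub>L s) ` S)"
proof
  fix v assume "v \<in> cspan J S"
  then obtain c where v: "v = (\<Sum>s\<in>S. cscale J (c s) s)" unfolding cspan_def by blast
  have "cscale J (c s) s \<in> span (S \<union> (\<lambda>s. J o\<^sub>L s) ` S)" if "s \<in> S" for s
    unfolding cscale_def using that by (intro span_add span_scale span_base) auto
  then show "v \<in> span (S \<union> (\<lambda>s. J o\<^sub>L s) ` S)" unfolding v by (intro span_sum) auto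
qed

lemma zero_in_cspan: "0 \<in> cspan J S"
proof -
  have "(\<Sum>s\<in>S. cscale J 0 s) = 0" unfolding cscale_def by simp
  then show ?thesis unfolding cspan_def by force
qed

lemma kolmogorov_le:
  assumes "X \<subseteq> X'" "0 \<in> X" "Y \<subseteq> Y'" "n \<ge> 1"
    and bound: "\<And>x. x \<in> X' \<Longrightarrow> norm x \<le> 1 \<Longrightarrow> norm (M x) \<le> K"
    and le: "\<And>S s x. finite S \<Longrightarrow> S \<subseteq> Y \<Longrightarrow>
      (\<And>y. y \<in> X \<Longrightarrow> norm y \<le> 1 \<Longrightarrow> infdist (M y) (cspan J S) \<le> s) \<Longrightarrow>
      x \<in> X' \<Longrightarrow> norm x \<le> 1 \<Longrightarrow> infdist (M x) (cspan J S) \<le> s"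
  shows "kolmogorov J X' Y' M n \<le> kolmogorov J X Y M n"
proof -
  define d where "d D V = Sup ((\<lambda>x. infdist (M x) V) ` {x \<in> D. norm x \<le> 1})" for D V
  have bdd: "bdd_above ((\<lambda>x. infdist (M x) (cspan J S)) ` {x \<in> D. norm x \<le> 1})"
    if "D \<subseteq> X'" for D S
  proof (rule bdd_aboveI2)
    fix x assume "x \<in> {x \<in> D. norm x \<le> 1}"
    then show "infdist (M x) (cspan J S) \<le> K"
      using infdist_le[OF zero_in_cspan, of "M x" J S] bound that by fastforce
  qed
  have d_nonneg: "0 \<le> d X' (cspan J S)" for S
    using cSUP_upper[OF _ bdd[OF order_refl], of 0 S] assms(1,2) infdist_nonneg
    unfolding d_def by (smt (verit) mem_Collect_eq norm_zero subsetD)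
  have d_le: "d X' (cspan J S) \<le> d X (cspan J S)" if "finite S" "S \<subseteq> Y" for S
    unfolding d_def
  proof (rule cSUP_least)
    show "{x \<in> X'. norm x \<le> 1} \<noteq> {}" using assms(1,2) by auto
    fix x assume "x \<in> {x \<in> X'. norm x \<le> 1}"
    then show "infdist (M x) (cspan J S) \<le> Sup ((\<lambda>x. infdist (M x) (cspan J S)) ` {x \<in> X. norm x \<le> 1})"
      using le[OF that] cSUP_upper[OF _ bdd[OF assms(1)]] by blast
  qed
  have "Inf {d X' V | V. \<exists>S. finite S \<and> card S < n \<and> S \<subseteq> Y' \<and> V = cspan J S}
      \<le> Inf {d X V | V. \<exists>S. finite S \<and> card S < n \<and> S \<subseteq> Y \<and> V = cspan J S}"
  proof (rule cInf_mono)
    show "{d X V | V. \<exists>S. finite S \<and> card S < n \<and> S \<subseteq> Y \<and> V = cspan J S} \<noteq> {}"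
      using assms(4) by (auto intro!: exI[of _ "{}"])
    show "bdd_below {d X' V | V. \<exists>S. finite S \<and> card S < n \<and> S \<subseteq> Y' \<and> V = cspan J S}"
      using d_nonneg by (auto intro!: bdd_belowI[of _ 0])
    fix r assume "r \<in> {d X V | V. \<exists>S. finite S \<and> card S < n \<and> S \<subseteq> Y \<and> V = cspan J S}"
    then show "\<exists>l \<in> {d X' V | V. \<exists>S. finite S \<and> card S < n \<and> S \<subseteq> Y' \<and> V = cspan J S}. l \<le> r"
      using d_le assms(3) by blast
  qed
  then show ?thesis unfolding kolmogorov_def d_def .
qed

theorem lemma3p6:
  fixes J :: "'h::{real_inner,complete_space} \<Rightarrow>\<^sub>L 'h"
    and B :: "('h \<Rightarrow>\<^sub>L 'h) set"
    and A :: "'h \<Rightarrow>\<^sub>L 'h"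
    and n :: nat
  assumes "complex_structure J"
    and "cstar_algebra J B"
    and "A \<in> B"
    and "n \<ge> 1"
  shows "kolmogorov J (wot_closure J B) (wot_closure J B) (\<lambda>X. A o\<^sub>L X o\<^sub>L A) n
           \<le> kolmogorov J B B (\<lambda>X. A o\<^sub>L X o\<^sub>L A) n"
proof -
  have B: "real_star_algebra B" by (rule cstar_algebra_imp_real_star_algebra[OF assms(2)])
  have B0: "0 \<in> B" using B unfolding real_star_algebra_def by blast
  have BW: "B \<subseteq> wot_closure J B" by (rule cstar_algebra_subset_wot_closure[OF assms(2)])
  have le: "infdist (A o\<^sub>L X o\<^sub>L A) (cspan J S) \<le> s"
    if "finite S" "S \<subseteq> B" "\<And>Y. Y \<in> B \<Longrightarrow> norm Y \<le> 1 \<Longrightarrow> infdist (A o\<^sub>L Y o\<^sub>L A) (cspan J S) \<le> s"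
      "X \<in> wot_closure J B" "norm X \<le> 1" for S s X
  proof (rule infdist_weak_closure_le[OF B _ cspan_subset_span zero_in_cspan])
    show "finite (S \<union> (o\<^sub>L) J ` S)" using that(1) by simp
  qed (use that in \<open>auto intro: wot_closure_subset_weak_closure[THEN subsetD]\<close>)
  show ?thesis
    by (rule kolmogorov_le[OF BW B0 BW assms(4) norm_sandwich_le le])
qed

end
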